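(* Let $k\ge l\ge0$, $H\in\mathcal{H}_{k,l}(\mathbb{R}^{2m},\mathbb{C})$, and integers $i\ge0$, $0\le j\le k-l$. Then $$C\big(C^iS_u^jH\big)=C^{i+1}S_u^jH,\qquad S_u\big(C^iS_u^jH\big)=\frac{H_x+i+1}{H_x+1}\,C^iS_u^{j+1}H.$$
   Context: Fix an integer $m>4$. For $x,u\in\mathbb{R}^m$ let $\mathcal{P}_{p,q}(\mathbb{R}^{2m},\mathbb{C})$ be complex polynomials of degree $p$ in $x$ and $q$ in $u$. Write $|x|^2=\sum x_j^2$, $\langle u,x\rangle=\sum u_jx_j$, $\Delta_x=\sum\partial_{x_j}^2$, $\Delta_u=\sum\partial_{u_j}^2$, $\langle\partial_u,\partial_x\rangle=\sum\partial_{u_j}\partial_{x_j}$, $\langle x,\partial_u\rangle=\sum x_j\partial_{u_j}$, $\langle u,\partial_x\rangle=\sum u_j\partial_{x_j}$, $\mathbb{E}_x=\sum x_j\partial_{x_j}$, $H_x=-(\mathbb{E}_x+\frac m2)$, $\ker(D_1,\dots,D_r)=\bigcap\ker D_i$. Every $P\in\mathcal{P}_{p,q}$ is uniquely $\sum_{a,b\ge0}|x|^{2a}|u|^{2b}H'_{p-2a,q-2b}$ with $H'_{p-2a,q-2b}\in\mathcal{P}_{p-2a,q-2b}\cap\ker(\Delta_x,\Delta_u)$; $\pi_{\mathfrak{s}}P:=H'_{p,q}$. On $\ker(\Delta_x,\Delta_u)$: $S_u=\pi_{\mathfrak{s}}\langle u,\partial_x\rangle$, $C=\pi_{\mathfrak{s}}\langle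 u,x\rangle$. For $k\ge l\ge0$, $\mathcal{H}_{k,l}=\mathcal{P}_{k,l}\cap\ker(\Delta_x,\Delta_u,\langle\partial_u,\partial_x\rangle,\langle x,\partial_u\rangle)$. Convention: the rational function of $H_x$ written to the left is evaluated at the eigenvalue of $H_x$ on the bihomogeneous polynomial $C^iS_u^{j+1}H$. *)

theory Defs
  imports Complex_Main "HOL-Library.Poly_Mapping"
begin

text \<open>Polynomials in the 2m real variables x_0..x_{m-1}, u_0..u_{m-1} with complex
coefficients, represented as finitely supported maps from monomials (exponent vectors)
to coefficients. Variable index j < m stands for x_j, index m+j stands for u_j.\<close>

type_synonym cpoly = "(nat \<Rightarrow>\<^sub>0 nat) \<Rightarrow>\<^sub>0 complex"

definition pvar :: "nat \<Rightarrow> cpoly" where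
  "pvar v = Poly_Mapping.single (Poly_Mapping.single v 1) 1"

definition pscale :: "complex \<Rightarrow> cpoly \<Rightarrow> cpoly" where
  "pscale c P = Poly_Mapping.map (\<lambda>a. c * a) P"

definition pd :: "nat \<Rightarrow> cpoly \<Rightarrow> cpoly" where
  "pd v P = (\<Sum>\<alpha>\<in>Poly_Mapping.keys P. Poly_Mapping.single (\<alpha> - Poly_Mapping.single v 1)
                   (of_nat (Poly_Mapping.lookup \<alpha> v) * Poly_Mapping.lookup P \<alpha>))"

definition xvar :: "nat \<Rightarrow> cpoly" where "xvar j = pvar j"
definition uvar :: "nat \<Rightarrow> nat \<Rightarrow> cpoly" where "uvar m j = pvar (m + j)"
definition dx :: "nat \<Rightarrow> cpoly \<Rightarrow> cpoly" where "dx j = pd j"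
definition du :: "nat \<Rightarrow> nat \<Rightarrow> cpoly \<Rightarrow> cpoly" where "du m j = pd (m + j)"

definition lap_x :: "nat \<Rightarrow> cpoly \<Rightarrow> cpoly" where
  "lap_x m P = (\<Sum>j<m. dx j (dx j P))"
definition lap_u :: "nat \<Rightarrow> cpoly \<Rightarrow> cpoly" where
  "lap_u m P = (\<Sum>j<m. du m j (du m j P))"
definition du_dx :: "nat \<Rightarrow> cpoly \<Rightarrow> cpoly" where
  "du_dx m P = (\<Sum>j<m. du m j (dx j P))"
definition x_du :: "nat \<Rightarrow> cpoly \<Rightarrow> cpoly" where
  "x_du m P = (\<Sum>j<m. xvar j * du m j P)"
definition u_dx :: "nat \<Rightarrow> cpoly \<Rightarrow> cpoly" where
  "u_dx m P = (\<Sum>j<m. uvar m j * dx j P)"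

definition normx2 :: "nat \<Rightarrow> cpoly" where "normx2 m = (\<Sum>j<m. xvar j * xvar j)"
definition normu2 :: "nat \<Rightarrow> cpoly" where "normu2 m = (\<Sum>j<m. uvar m j * uvar m j)"
definition ux :: "nat \<Rightarrow> cpoly" where "ux m = (\<Sum>j<m. uvar m j * xvar j)"

definition bihom :: "nat \<Rightarrow> nat \<Rightarrow> nat \<Rightarrow> cpoly \<Rightarrow> bool" where
  "bihom m p q P \<longleftrightarrow> (\<forall>\<alpha>\<in>Poly_Mapping.keys P. Poly_Mapping.keys \<alpha> \<subseteq> {..<2*m}
        \<and> (\<Sum>j<m. Poly_Mapping.lookup \<alpha> j) = p \<and> (\<Sum>j<m. Poly_Mapping.lookup \<alpha> (m + j)) = q)"

definition harm :: "nat \<Rightarrow> cpoly \<Rightarrow> bool" where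
  "harm m P \<longleftrightarrow> lap_x m P = 0 \<and> lap_u m P = 0"

definition pi_s :: "nat \<Rightarrow> cpoly \<Rightarrow> cpoly" where
  "pi_s m P = (THE h. \<exists>p q G. bihom m p q P
      \<and> (\<forall>a\<le>p div 2. \<forall>b\<le>q div 2. bihom m (p - 2*a) (q - 2*b) (G a b) \<and> harm m (G a b))
      \<and> P = (\<Sum>a\<le>p div 2. \<Sum>b\<le>q div 2. normx2 m ^ a * normu2 m ^ b * G a b)
      \<and> h = G 0 0)"

definition S_u :: "nat \<Rightarrow> cpoly \<Rightarrow> cpoly" where "S_u m P = pi_s m (u_dx m P)"
definition C_op :: "nat \<Rightarrow> cpoly \<Rightarrow> cpoly" where "C_op m P = pi_s m (ux m * P)"

definition Hkl :: "nat \<Rightarrow> nat \<Rightarrow> nat \<Rightarrow> cpoly set" where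
  "Hkl m k l = {P. bihom m k l P \<and> lap_x m P = 0 \<and> lap_u m P = 0
                  \<and> du_dx m P = 0 \<and> x_du m P = 0}"

text \<open>Eigenvalue of H_x = -(E_x + m/2) on polynomials of x-degree d.\<close>
definition hx_eig :: "nat \<Rightarrow> int \<Rightarrow> complex" where
  "hx_eig m d = - (of_int d + of_nat m / 2)"

end

theory Submission
  imports Defs
begin

text \<open>
  Both operators are computed in closed form on a harmonic polynomial \<open>Y\<close> of bidegree \<open>(p, q)\<close>.
  Write \<open>E = \<langle>u,\<partial>\<^sub>x\<rangle>\<close>, \<open>F = \<langle>x,\<partial>\<^sub>u\<rangle>\<close>, \<open>D = \<langle>\<partial>\<^sub>u,\<partial>\<^sub>x\<rangle>\<close> and
  \<open>\<mu>\<^sub>n = m + 2n - 2\<close>. The commutation relations of these operators with \<open>|x|\<^sup>2\<close>, \<open>|u|\<^sup>2\<close>,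
  \<open>\<langle>u,x\<rangle>\<close> and the two Laplacians show that
  \<open>\<langle>u,x\<rangle>Y - |x|\<^sup>2EY/\<mu>\<^sub>p - |u|\<^sup>2FY/\<mu>\<^sub>q + |x|\<^sup>2|u|\<^sup>2DY/(\<mu>\<^sub>p\<mu>\<^sub>q)\<close> and
  \<open>EY - |u|\<^sup>2DY/\<mu>\<^sub>q\<close> are harmonic and differ from \<open>\<langle>u,x\<rangle>Y\<close> and \<open>EY\<close> by elements of the
  ideal \<open>(|x|\<^sup>2, |u|\<^sup>2)\<close>. A harmonic polynomial in that ideal is orthogonal to itself for the
  Fischer inner product, so it vanishes; hence these are \<open>CY\<close> and \<open>S\<^sub>uY\<close>.

  Iterating, \<open>C\<^sup>iX \<equiv> \<langle>u,x\<rangle>\<^sup>iX + \<alpha>\<^sub>i|x|\<^sup>2\<langle>u,x\<rangle>\<^sup>i\<^sup>-\<^sup>1EX\<close> modulo \<open>|x|\<^sup>4\<close> and \<open>|u|\<^sup>2\<close>, and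
  applying \<open>E\<close> shows that \<open>S\<^sub>uC\<^sup>iX\<close> and \<open>\<beta>\<^sub>iC\<^sup>iS\<^sub>uX\<close> are harmonic and congruent modulo
  \<open>(|x|\<^sup>2, |u|\<^sup>2)\<close>, hence equal, where \<open>\<beta>\<^sub>i = (m + 2p - 4)/(m + 2p + 2i - 4)\<close>. For
  \<open>X = S\<^sub>u\<^sup>jH\<close> one has \<open>p = k - j\<close>, and \<open>\<beta>\<^sub>i\<close> is the stated ratio of eigenvalues of \<open>H\<^sub>x\<close>.
\<close>

abbreviation lookup :: "('a \<Rightarrow>\<^sub>0 'b::zero) \<Rightarrow> 'a \<Rightarrow> 'b" where "lookup \<equiv> Poly_Mapping.lookup"

abbreviation keys :: "('a \<Rightarrow>\<^sub>0 'b::zero) \<Rightarrow> 'a set" where "keys \<equiv> Poly_Mapping.keys"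

abbreviation unitv :: "nat \<Rightarrow> (nat \<Rightarrow>\<^sub>0 nat)" where "unitv v \<equiv> Poly_Mapping.single v (Suc 0)"

abbreviation cst :: "complex \<Rightarrow> cpoly" where "cst c \<equiv> Poly_Mapping.single 0 c"

lemma lookup_unitv [simp]: "lookup (unitv v) w = (if v = w then 1 else 0)"
  by (simp add: lookup_single when_def)

lemmas exponent_eq_iff = poly_mapping_eq_iff fun_eq_iff lookup_add lookup_minus

lemma eq_unitv_add_iff: "\<beta> = unitv w + \<gamma> \<longleftrightarrow> 1 \<le> lookup \<beta> w \<and> \<gamma> = \<beta> - unitv w"
  by (auto simp: exponent_eq_iff)

lemma minus_unitv_add: "1 \<le> lookup \<beta> v \<Longrightarrow> \<beta> - unitv v + unitv v = \<beta>"
  by (auto simp: exponent_eq_iff)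

lemma lookup_pvar_mult:
  "lookup (pvar w * G) \<beta> = (if 1 \<le> lookup \<beta> w then lookup G (\<beta> - unitv w) else 0)"
proof -
  have "lookup (pvar w * G) \<beta> = Sum_any (\<lambda>\<gamma>. lookup G \<gamma> when \<beta> = unitv w + \<gamma>)"
    by (simp add: pvar_def lookup_mult lookup_single when_mult)
  also have "\<dots> = Sum_any (\<lambda>\<gamma>. lookup G \<gamma> when 1 \<le> lookup \<beta> w \<and> \<gamma> = \<beta> - unitv w)"
    unfolding eq_unitv_add_iff ..
  finally show ?thesis
    by (cases "1 \<le> lookup \<beta> w") simp_all
qed

lemma lookup_cst_mult: "lookup (cst c * G) \<beta> = c * lookup G \<beta>"
  by (simp add: lookup_mult lookup_single when_mult)

lemma lookup_of_nat_mult: "lookup (of_nat n * (G::cpoly)) \<beta> = of_nat n * lookup G \<beta>"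
  using lookup_cst_mult[of "of_nat n" G \<beta>] by simp

lemma lookup_numeral_mult: "lookup (numeral n * (G::cpoly)) \<beta> = numeral n * lookup G \<beta>"
  using lookup_cst_mult[of "numeral n" G \<beta>] by simp

lemmas lookup_linear = lookup_add lookup_minus lookup_cst_mult lookup_numeral_mult
  lookup_of_nat_mult lookup_zero lookup_uminus

lemma cst_mult: "cst a * cst b = cst (a * b)"
  by (simp add: mult_single)

lemma lookup_pd: "lookup (pd v P) \<beta> = of_nat (lookup \<beta> v + 1) * lookup P (\<beta> + unitv v)"
proof -
  have shift: "(of_nat (lookup \<alpha> v) * lookup P \<alpha> when \<alpha> - unitv v = \<beta>)
             = (of_nat (lookup \<alpha> v) * lookup P \<alpha> when \<alpha> = \<beta> + unitv v)" for \<alpha>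
  proof (cases "lookup \<alpha> v = 0")
    case False
    then have "\<alpha> - unitv v = \<beta> \<longleftrightarrow> \<alpha> = \<beta> + unitv v"
      by (auto simp: exponent_eq_iff)
    then show ?thesis by simp
  qed (auto simp: when_def lookup_add)
  have "lookup (pd v P) \<beta> = (\<Sum>\<alpha>\<in>keys P. of_nat (lookup \<alpha> v) * lookup P \<alpha> when \<alpha> - unitv v = \<beta>)"
    by (simp add: pd_def lookup_sum lookup_single when_def eq_commute)
  also have "\<dots> = (\<Sum>\<alpha>\<in>keys P. of_nat (lookup \<alpha> v) * lookup P \<alpha> when \<alpha> = \<beta> + unitv v)"
    by (simp only: shift)
  also have "\<dots> = of_nat (lookup \<beta> v + 1) * lookup P (\<beta> + unitv v)"
    by (auto simp: when_def lookup_add in_keys_iff)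
  finally show ?thesis .
qed

lemma lookup_pvar_mult_pd: "lookup (pvar v * pd v G) \<beta> = of_nat (lookup \<beta> v) * lookup G \<beta>"
  by (cases "1 \<le> lookup \<beta> v") (auto simp: lookup_pvar_mult lookup_pd lookup_minus minus_unitv_add)

lemma pd_add: "pd v (A + B) = pd v A + pd v B"
  by (rule poly_mapping_eqI) (simp add: lookup_pd lookup_add algebra_simps)

lemma pd_cst_mult: "pd v (cst c * A) = cst c * pd v A"
  by (rule poly_mapping_eqI) (simp add: lookup_pd lookup_cst_mult mult.left_commute)

lemma pd_pvar_mult: "pd v (pvar w * G) = (if v = w then G else 0) + pvar w * pd v G"
proof (rule poly_mapping_eqI)
  fix \<beta>
  have shift: "\<beta> + unitv v - unitv w = \<beta> - unitv w + unitv v" if "1 \<le> lookup \<beta> w"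
    using that by (auto simp: exponent_eq_iff)
  show "lookup (pd v (pvar w * G)) \<beta> = lookup ((if v = w then G else 0) + pvar w * pd v G) \<beta>"
    by (cases "1 \<le> lookup \<beta> w")
      (auto simp: lookup_pd lookup_pvar_mult lookup_add lookup_minus minus_unitv_add shift
        ring_distribs)
qed

lemma pd_commute: "pd v (pd w P) = pd w (pd v P)"
  by (rule poly_mapping_eqI) (simp add: lookup_pd lookup_add algebra_simps)

definition linear_op :: "(cpoly \<Rightarrow> cpoly) \<Rightarrow> bool" where
  "linear_op f \<longleftrightarrow> (\<forall>A B. f (A + B) = f A + f B) \<and> (\<forall>c A. f (cst c * A) = cst c * f A)"

lemma linear_opI:
  "(\<And>A B. f (A + B) = f A + f B) \<Longrightarrow> (\<And>c A. f (cst c * A) = cst c * f A) \<Longrightarrow> linear_op f"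
  by (simp add: linear_op_def)

lemma
  assumes "linear_op f"
  shows linear_op_add: "f (A + B) = f A + f B"
    and linear_op_cst_mult: "f (cst c * A) = cst c * f A"
    and linear_op_zero: "f 0 = 0"
    and linear_op_diff: "f (A - B) = f A - f B"
    and linear_op_of_nat_mult: "f (of_nat n * A) = of_nat n * f A"
    and linear_op_numeral_mult: "f (numeral k * A) = numeral k * f A"
    and linear_op_sum: "f (\<Sum>i\<in>S. g i) = (\<Sum>i\<in>S. f (g i))"
proof -
  have add: "f (A + B) = f A + f B" and cst: "f (cst c * A) = cst c * f A" for A B c
    using assms by (simp_all add: linear_op_def)
  show "f (A + B) = f A + f B" "f (cst c * A) = cst c * f A" by (fact add cst)+
  show zero: "f 0 = 0" using cst[of 0 0] by simp
  have "f (A - B) = f (A + cst (- 1) * B)" by (simp add: single_uminus)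
  also have "\<dots> = f A - f B" by (simp only: add cst) (simp add: single_uminus)
  finally show "f (A - B) = f A - f B" .
  show "f (of_nat n * A) = of_nat n * f A" using cst[of "of_nat n"] by simp
  show "f (numeral k * A) = numeral k * f A" using cst[of "numeral k"] by simp
  show "f (\<Sum>i\<in>S. g i) = (\<Sum>i\<in>S. f (g i))"
    by (induction S rule: infinite_finite_induct) (simp_all add: zero add)
qed

lemmas linear_op_simps = linear_op_add linear_op_diff linear_op_cst_mult linear_op_of_nat_mult
  linear_op_numeral_mult linear_op_zero linear_op_sum

lemma linear_op_pd: "linear_op (pd v)"
  by (rule linear_opI) (fact pd_add pd_cst_mult)+

lemma pd_zero [simp]: "pd v 0 = 0"
  by (rule linear_op_zero[OF linear_op_pd])

lemma linear_op_mult_left: "linear_op (\<lambda>P. Q * P)"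
  by (rule linear_opI) (simp_all add: distrib_left mult.left_commute)

lemma linear_op_comp:
  assumes "linear_op f" "linear_op g"
  shows "linear_op (\<lambda>P. f (g P))"
  by (rule linear_opI) (simp_all add: linear_op_add[OF assms(1)] linear_op_add[OF assms(2)]
      linear_op_cst_mult[OF assms(1)] linear_op_cst_mult[OF assms(2)])

lemma linear_op_sum_ops:
  assumes "\<And>j. linear_op (f j)"
  shows "linear_op (\<lambda>P. \<Sum>j\<in>S. f j P)"
  by (rule linear_opI)
    (simp_all add: linear_op_add[OF assms] linear_op_cst_mult[OF assms] sum.distrib
      sum_distrib_left)

section \<open>Contractions over the two blocks of variables\<close>

text \<open>Variables are numbered so that \<open>x\<^sub>j = pvar j\<close> and \<open>u\<^sub>j = pvar (m + j)\<close>; an offset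
  \<open>a \<in> {0, m}\<close> selects one of the two blocks of variables.\<close>

definition block_offset :: "nat \<Rightarrow> nat \<Rightarrow> bool" where
  "block_offset m a \<longleftrightarrow> a = 0 \<or> a = m"

definition contr_mult :: "nat \<Rightarrow> nat \<Rightarrow> nat \<Rightarrow> cpoly \<Rightarrow> cpoly" where
  "contr_mult m a b G = (\<Sum>j<m. pvar (a + j) * (pvar (b + j) * G))"

definition contr_diff :: "nat \<Rightarrow> nat \<Rightarrow> nat \<Rightarrow> cpoly \<Rightarrow> cpoly" where
  "contr_diff m a b G = (\<Sum>j<m. pd (a + j) (pd (b + j) G))"

definition contr_field :: "nat \<Rightarrow> nat \<Rightarrow> nat \<Rightarrow> cpoly \<Rightarrow> cpoly" where
  "contr_field m a b G = (\<Sum>j<m. pvar (a + j) * pd (b + j) G)"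

lemma block_offset_0 [simp]: "block_offset m 0" and block_offset_m [simp]: "block_offset m m"
  by (simp_all add: block_offset_def)

lemma linear_op_contr_mult: "linear_op (contr_mult m a b)"
  by (rule linear_opI)
    (simp_all add: contr_mult_def distrib_left sum.distrib sum_distrib_left mult.left_commute)

lemma linear_op_contr_diff: "linear_op (contr_diff m a b)"
  unfolding contr_diff_def [abs_def]
  by (intro linear_op_sum_ops linear_op_comp[OF linear_op_pd linear_op_pd])

lemma linear_op_contr_field: "linear_op (contr_field m a b)"
  unfolding contr_field_def [abs_def]
  by (intro linear_op_sum_ops linear_op_comp[OF linear_op_mult_left linear_op_pd])

lemma contr_mult_mult: "contr_mult m a b (A * B) = A * contr_mult m a b B"
  by (simp add: contr_mult_def sum_distrib_left mult.left_commute)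

lemma sum_if_const_cond: "(\<Sum>j\<in>S. if P then f j else 0) = (if P then \<Sum>j\<in>S. f j else (0::cpoly))"
  by simp

lemma block_offset_add_eq_iff:
  "block_offset m a \<Longrightarrow> block_offset m c \<Longrightarrow> j < m \<Longrightarrow> i < m \<Longrightarrow> a + j = c + i \<longleftrightarrow> a = c \<and> j = i"
  unfolding block_offset_def by auto

lemma sum_block_delta:
  assumes "block_offset m a" "block_offset m c" "j < m"
  shows "(\<Sum>i<m. if a + j = c + i then f i else 0) = (if a = c then f j else (0::cpoly))"
proof -
  have "(\<Sum>i<m. if a + j = c + i then f i else 0) = (\<Sum>i<m. if a = c \<and> i = j then f i else 0)"
    using block_offset_add_eq_iff[OF assms(1,2) assms(3)] by (intro sum.cong) auto
  then show ?thesis using assms(3) by simp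
qed

lemma pd_contr_mult:
  assumes "block_offset m s" "block_offset m c" "block_offset m d" "j < m"
  shows "pd (s + j) (contr_mult m c d G) = contr_mult m c d (pd (s + j) G)
          + (if s = c then pvar (d + j) * G else 0) + (if s = d then pvar (c + j) * G else 0)"
proof -
  have "pd (s + j) (contr_mult m c d G)
      = (\<Sum>i<m. (if s + j = c + i then pvar (d + i) * G else 0)
             + ((if s + j = d + i then pvar (c + i) * G else 0)
                + pvar (c + i) * (pvar (d + i) * pd (s + j) G)))"
    unfolding contr_mult_def linear_op_sum[OF linear_op_pd]
    by (intro sum.cong refl)
      (simp only: pd_pvar_mult distrib_left if_distrib[where f="(*) (pvar _)"] mult_zero_right)
  also have "\<dots> = (\<Sum>i<m. if s + j = c + i then pvar (d + i) * G else 0)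
      + (\<Sum>i<m. if s + j = d + i then pvar (c + i) * G else 0) + contr_mult m c d (pd (s + j) G)"
    by (simp only: sum.distrib contr_mult_def add.assoc)
  finally show ?thesis
    by (simp add: sum_block_delta assms)
qed

lemma pd_contr_field:
  assumes "block_offset m s" "block_offset m c" "j < m"
  shows "pd (s + j) (contr_field m c d G)
          = contr_field m c d (pd (s + j) G) + (if s = c then pd (d + j) G else 0)"
proof -
  have "pd (s + j) (contr_field m c d G)
      = (\<Sum>i<m. (if s + j = c + i then pd (d + i) G else 0)
      + pvar (c + i) * pd (d + i) (pd (s + j) G))"
    by (simp only: contr_field_def linear_op_sum[OF linear_op_pd] pd_pvar_mult pd_commute)
  also have "\<dots> = (\<Sum>i<m. if s + j = c + i then pd (d + i) G else 0)
      + contr_field m c d (pd (s + j) G)"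
    by (simp only: sum.distrib contr_field_def)
  finally show ?thesis
    by (simp add: sum_block_delta assms)
qed

lemma pvar_mult_contr_field:
  assumes "block_offset m a" "block_offset m d" "j < m"
  shows "pvar (a + j) * contr_field m c d H
          = contr_field m c d (pvar (a + j) * H) - (if d = a then pvar (c + j) * H else 0)"
proof -
  have "contr_field m c d (pvar (a + j) * H)
      = (\<Sum>i<m. (if a + j = d + i then pvar (c + i) * H else 0)
             + pvar (a + j) * (pvar (c + i) * pd (d + i) H))"
    unfolding contr_field_def
    by (intro sum.cong refl)
      (simp only: pd_pvar_mult distrib_left eq_commute[of "d + _"]
        if_distrib[where f="(*) (pvar _)"]
         mult_zero_right mult.left_commute)
  also have "\<dots> = (\<Sum>i<m. if a + j = d + i then pvar (c + i) * H else 0)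
      + pvar (a + j) * contr_field m c d H"
    by (simp only: sum.distrib contr_field_def sum_distrib_left)
  also have "\<dots> = (if d = a then pvar (c + j) * H else 0) + pvar (a + j) * contr_field m c d H"
    using assms by (simp add: sum_block_delta eq_commute[of a d])
  finally show ?thesis by simp
qed

lemma contr_field_contr_mult:
  assumes "block_offset m a" "block_offset m b" "block_offset m c" "block_offset m d"
  shows "contr_field m a b (contr_mult m c d G) = contr_mult m c d (contr_field m a b G)
     + (if b = c then contr_mult m a d G else 0) + (if b = d then contr_mult m a c G else 0)"
proof -
  have "contr_field m a b (contr_mult m c d G)
      = (\<Sum>j<m. contr_mult m c d (pvar (a + j) * pd (b + j) G)
         + (if b = c then pvar (a + j) * (pvar (d + j) * G) else 0)
         + (if b = d then pvar (a + j) * (pvar (c + j) * G) else 0))"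
    unfolding contr_field_def
    by (intro sum.cong refl) (simp add: pd_contr_mult assms distrib_left contr_mult_mult)
  then show ?thesis
    by (simp only: sum.distrib sum_if_const_cond contr_field_def
        linear_op_sum[OF linear_op_contr_mult]) (simp only: contr_mult_def)
qed

lemma pd_pd_contr_mult:
  assumes "block_offset m a" "block_offset m b" "block_offset m c" "block_offset m d" "j < m"
  shows "pd (a + j) (pd (b + j) (contr_mult m c d G)) = contr_mult m c d (pd (a + j) (pd (b + j) G))
     + (if a = c then pvar (d + j) * pd (b + j) G else 0)
     + (if a = d then pvar (c + j) * pd (b + j) G else 0)
     + (if b = c then pvar (d + j) * pd (a + j) G else 0)
     + (if b = d then pvar (c + j) * pd (a + j) G else 0)
     + (if b = c \<and> a = d then G else 0) + (if b = d \<and> a = c then G else 0)"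
proof -
  have "pd (a + j) (pd (b + j) (contr_mult m c d G)) = pd (a + j) (contr_mult m c d (pd (b + j) G))
      + (if b = c then pd (a + j) (pvar (d + j) * G) else 0)
      + (if b = d then pd (a + j) (pvar (c + j) * G) else 0)"
    by (simp add: pd_contr_mult[OF assms(2-5)] pd_add)
  also have "\<dots> = contr_mult m c d (pd (a + j) (pd (b + j) G))
     + (if a = c then pvar (d + j) * pd (b + j) G else 0)
     + (if a = d then pvar (c + j) * pd (b + j) G else 0)
     + (if b = c then (if a = d then G else 0) + pvar (d + j) * pd (a + j) G else 0)
     + (if b = d then (if a = c then G else 0) + pvar (c + j) * pd (a + j) G else 0)"
    by (simp only: pd_contr_mult[OF assms(1,3-5)] pd_pvar_mult add_right_cancel)
  finally show ?thesis
    by (cases "b = c"; cases "a = d"; cases "b = d"; cases "a = c") (simp_all add: algebra_simps)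
qed

lemma contr_diff_contr_mult:
  assumes "block_offset m a" "block_offset m b" "block_offset m c" "block_offset m d"
  shows "contr_diff m a b (contr_mult m c d G) = contr_mult m c d (contr_diff m a b G)
     + (if a = c then contr_field m d b G else 0) + (if a = d then contr_field m c b G else 0)
     + (if b = c then contr_field m d a G else 0) + (if b = d then contr_field m c a G else 0)
     + (if b = c \<and> a = d then of_nat m * G else 0) + (if b = d \<and> a = c then of_nat m * G else 0)"
proof -
  have "contr_diff m a b (contr_mult m c d G) = (\<Sum>j<m. contr_mult m c d (pd (a + j) (pd (b + j) G))
     + (if a = c then pvar (d + j) * pd (b + j) G else 0)
     + (if a = d then pvar (c + j) * pd (b + j) G else 0)
     + (if b = c then pvar (d + j) * pd (a + j) G else 0)
     + (if b = d then pvar (c + j) * pd (a + j) G else 0)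
     + (if b = c \<and> a = d then G else 0) + (if b = d \<and> a = c then G else 0))"
    unfolding contr_diff_def by (intro sum.cong refl) (simp add: pd_pd_contr_mult assms)
  then show ?thesis
    by (simp only: sum.distrib sum_if_const_cond contr_diff_def sum_constant
        linear_op_sum[OF linear_op_contr_mult]) (simp add: contr_field_def of_nat_mult)
qed

lemma contr_diff_contr_field:
  assumes "block_offset m a" "block_offset m b" "block_offset m c"
  shows "contr_diff m a b (contr_field m c d G) = contr_field m c d (contr_diff m a b G)
     + (if a = c then contr_diff m d b G else 0) + (if b = c then contr_diff m a d G else 0)"
proof -
  have "pd (a + j) (pd (b + j) (contr_field m c d G))
      = contr_field m c d (pd (a + j) (pd (b + j) G))
     + (if a = c then pd (d + j) (pd (b + j) G) else 0)
     + (if b = c then pd (a + j) (pd (d + j) G) else 0)"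
    if "j < m" for j
    by (simp only: pd_contr_field[OF assms(2,3) that] pd_contr_field[OF assms(1,3) that] pd_add
        pd_commute[of "d + j" "b + j"]) (cases "a = c"; cases "b = c"; simp add: algebra_simps)
  then have "contr_diff m a b (contr_field m c d G)
      = (\<Sum>j<m. contr_field m c d (pd (a + j) (pd (b + j) G))
     + (if a = c then pd (d + j) (pd (b + j) G) else 0)
     + (if b = c then pd (a + j) (pd (d + j) G) else 0))"
    unfolding contr_diff_def by (intro sum.cong refl) simp
  then show ?thesis
    by (simp only: sum.distrib sum_if_const_cond linear_op_sum[OF linear_op_contr_field]
      contr_diff_def)
qed

lemma contr_field_contr_field:
  assumes "block_offset m a" "block_offset m b" "block_offset m c" "block_offset m d"
  shows "contr_field m a b (contr_field m c d G) = contr_field m c d (contr_field m a b G)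
     + (if b = c then contr_field m a d G else 0) - (if a = d then contr_field m c b G else 0)"
proof -
  have "pvar (a + j) * pd (b + j) (contr_field m c d G)
      = contr_field m c d (pvar (a + j) * pd (b + j) G)
     - (if d = a then pvar (c + j) * pd (b + j) G else 0)
     + (if b = c then pvar (a + j) * pd (d + j) G else 0)"
    if "j < m" for j
    by (simp only: pd_contr_field[OF assms(2,3) that] distrib_left
      pvar_mult_contr_field[OF assms(1,4) that])
      (cases "b = c"; simp)
  then have "contr_field m a b (contr_field m c d G)
      = (\<Sum>j<m. contr_field m c d (pvar (a + j) * pd (b + j) G)
     - (if d = a then pvar (c + j) * pd (b + j) G else 0)
     + (if b = c then pvar (a + j) * pd (d + j) G else 0))"
    unfolding contr_field_def[of m a b] by (intro sum.cong refl) simp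
  also have "\<dots> = contr_field m c d (contr_field m a b G)
     + (if b = c then contr_field m a d G else 0) - (if a = d then contr_field m c b G else 0)"
    unfolding sum.distrib sum_subtractf sum_if_const_cond
      linear_op_sum[OF linear_op_contr_field, symmetric]
    by (simp add: contr_field_def eq_commute[of d a])
  finally show ?thesis .
qed

lemma contr_diff_contr_diff: "contr_diff m a b (contr_diff m c d G)
    = contr_diff m c d (contr_diff m a b G)"
proof -
  have "contr_diff m a b (contr_diff m c d G)
      = (\<Sum>j<m. \<Sum>i<m. pd (a + j) (pd (b + j) (pd (c + i) (pd (d + i) G))))"
    by (simp only: contr_diff_def linear_op_sum[OF linear_op_pd])
  also have "\<dots> = (\<Sum>i<m. \<Sum>j<m. pd (c + i) (pd (d + i) (pd (a + j) (pd (b + j) G))))"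
    by (subst sum.swap) (simp only: pd_commute)
  also have "\<dots> = contr_diff m c d (contr_diff m a b G)"
    by (simp only: contr_diff_def linear_op_sum[OF linear_op_pd])
  finally show ?thesis .
qed

definition has_bidegree :: "nat \<Rightarrow> nat \<Rightarrow> nat \<Rightarrow> (nat \<Rightarrow>\<^sub>0 nat) \<Rightarrow> bool" where
  "has_bidegree m p q \<beta> \<longleftrightarrow>
     keys \<beta> \<subseteq> {..<2*m} \<and> (\<Sum>j<m. lookup \<beta> j) = p \<and> (\<Sum>j<m. lookup \<beta> (m + j)) = q"

lemma bihom_iff: "bihom m p q G \<longleftrightarrow> (\<forall>\<beta>. lookup G \<beta> \<noteq> 0 \<longrightarrow> has_bidegree m p q \<beta>)"
  unfolding bihom_def has_bidegree_def by (auto simp: in_keys_iff)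

lemma has_bidegree_add_unitv:
  assumes "v < 2*m"
  shows "has_bidegree m p q (\<beta> + unitv v) \<longleftrightarrow> keys \<beta> \<subseteq> {..<2*m}
     \<and> (\<Sum>j<m. lookup \<beta> j) + (if v < m then 1 else 0) = p
     \<and> (\<Sum>j<m. lookup \<beta> (m + j)) + (if m \<le> v then 1 else 0) = q"
proof -
  have "(\<Sum>j<m. if v = m + j then 1 else 0) = (\<Sum>j<m. if j = v - m \<and> m \<le> v then 1 else (0::nat))"
    by (intro sum.cong) auto
  then have u: "(\<Sum>j<m. lookup (\<beta> + unitv v) (m + j)) = (\<Sum>j<m. lookup \<beta> (m + j))
      + (if m \<le> v then 1 else 0)"
    using assms by (auto simp: lookup_add sum.distrib)
  have x: "(\<Sum>j<m. lookup (\<beta> + unitv v) j) = (\<Sum>j<m. lookup \<beta> j) + (if v < m then 1 else 0)"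
    by (simp add: lookup_add sum.distrib)
  have "keys (\<beta> + unitv v) = keys \<beta> \<union> {v}"
    by (auto simp: in_keys_iff lookup_add split: if_splits)
  then show ?thesis
    unfolding has_bidegree_def x u using assms by auto
qed

lemma bihom_zero [simp]: "bihom m p q 0"
  by (simp add: bihom_iff)

lemma bihom_add: "bihom m p q A \<Longrightarrow> bihom m p q B \<Longrightarrow> bihom m p q (A + B)"
  unfolding bihom_iff lookup_add by (metis add.right_neutral add_0)

lemma bihom_diff: "bihom m p q A \<Longrightarrow> bihom m p q B \<Longrightarrow> bihom m p q (A - B)"
  unfolding bihom_iff lookup_minus by (metis diff_zero diff_self)

lemma bihom_cst_mult: "bihom m p q A \<Longrightarrow> bihom m p q (cst c * A)"
  by (auto simp: bihom_iff lookup_cst_mult)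

lemma bihom_sum: "(\<And>i. i \<in> S \<Longrightarrow> bihom m p q (f i)) \<Longrightarrow> bihom m p q (\<Sum>i\<in>S. f i)"
  by (induction S rule: infinite_finite_induct) (auto intro: bihom_add)

lemma bihom_pvar_mult:
  assumes "v < 2*m" "bihom m p q G"
  shows "bihom m (p + (if v < m then 1 else 0)) (q + (if m \<le> v then 1 else 0)) (pvar v * G)"
  unfolding bihom_iff
proof (intro allI impI)
  fix \<beta> assume "lookup (pvar v * G) \<beta> \<noteq> 0"
  then have v: "1 \<le> lookup \<beta> v" and "lookup G (\<beta> - unitv v) \<noteq> 0"
    by (auto simp: lookup_pvar_mult split: if_splits)
  then have "has_bidegree m p q (\<beta> - unitv v)"
    using assms(2) by (auto simp: bihom_iff)
  then have "has_bidegree m (p + (if v < m then 1 else 0)) (q + (if m \<le> v then 1 else 0))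
      (\<beta> - unitv v + unitv v)"
    unfolding has_bidegree_add_unitv[OF assms(1)] by (simp add: has_bidegree_def)
  then show "has_bidegree m (p + (if v < m then 1 else 0)) (q + (if m \<le> v then 1 else 0)) \<beta>"
    by (simp only: minus_unitv_add[OF v])
qed

lemma bihom_pd:
  assumes "v < 2*m" "bihom m p q G"
  shows "bihom m (p - (if v < m then 1 else 0)) (q - (if m \<le> v then 1 else 0)) (pd v G)"
  unfolding bihom_iff
proof (intro allI impI)
  fix \<beta> assume "lookup (pd v G) \<beta> \<noteq> 0"
  then have "has_bidegree m p q (\<beta> + unitv v)"
    using assms(2) by (auto simp: lookup_pd bihom_iff)
  then show "has_bidegree m (p - (if v < m then 1 else 0)) (q - (if m \<le> v then 1 else 0)) \<beta>"
    unfolding has_bidegree_add_unitv[OF assms(1)] by (auto simp: has_bidegree_def)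
qed

lemma pd_eq_0_of_bihom:
  assumes "v < 2*m" "bihom m p q G" "v < m \<and> p = 0 \<or> m \<le> v \<and> q = 0"
  shows "pd v G = 0"
proof (rule poly_mapping_eqI, rule ccontr)
  fix \<beta> assume "lookup (pd v G) \<beta> \<noteq> lookup 0 \<beta>"
  then have "has_bidegree m p q (\<beta> + unitv v)"
    using assms(2) by (auto simp: lookup_pd bihom_iff)
  then show False
    unfolding has_bidegree_add_unitv[OF assms(1)] using assms(3) by auto
qed

section \<open>The Fischer inner product\<close>

definition exp_fact :: "(nat \<Rightarrow>\<^sub>0 nat) \<Rightarrow> nat" where
  "exp_fact \<alpha> = (\<Prod>w\<in>keys \<alpha>. fact (lookup \<alpha> w))"

lemma exp_fact_superset: "finite S \<Longrightarrow> keys \<alpha> \<subseteq> S \<Longrightarrow> exp_fact \<alpha> = (\<Prod>w\<in>S. fact (lookup \<alpha> w))"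
  unfolding exp_fact_def by (rule prod.mono_neutral_left) (auto simp: in_keys_iff)

lemma exp_fact_add_unitv: "exp_fact (\<alpha> + unitv v) = exp_fact \<alpha> * (lookup \<alpha> v + 1)"
proof -
  let ?S = "insert v (keys \<alpha>)"
  have "exp_fact (\<alpha> + unitv v) = (\<Prod>w\<in>?S. fact (lookup (\<alpha> + unitv v) w))"
    by (rule exp_fact_superset) (auto simp: in_keys_iff lookup_add split: if_splits)
  also have "\<dots> = fact (lookup \<alpha> v + 1) * (\<Prod>w\<in>keys \<alpha> - {v}. fact (lookup (\<alpha> + unitv v) w))"
    by (simp add: prod.insert_remove lookup_add)
  also have "(\<Prod>w\<in>keys \<alpha> - {v}. fact (lookup (\<alpha> + unitv v) w))
      = (\<Prod>w\<in>keys \<alpha> - {v}. fact (lookup \<alpha> w))"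
    by (intro prod.cong refl) (auto simp: lookup_add)
  finally have 1: "exp_fact (\<alpha> + unitv v)
      = fact (lookup \<alpha> v + 1) * (\<Prod>w\<in>keys \<alpha> - {v}. fact (lookup \<alpha> w))" .
  have "exp_fact \<alpha> = (\<Prod>w\<in>?S. fact (lookup \<alpha> w))"
    by (rule exp_fact_superset) auto
  then have "exp_fact \<alpha> = fact (lookup \<alpha> v) * (\<Prod>w\<in>keys \<alpha> - {v}. fact (lookup \<alpha> w))"
    by (simp add: prod.insert_remove)
  with 1 show ?thesis
    by (simp add: algebra_simps)
qed

definition fischer :: "cpoly \<Rightarrow> cpoly \<Rightarrow> complex" where
  "fischer P Q = (\<Sum>\<alpha>\<in>keys P. of_nat (exp_fact \<alpha>) * lookup P \<alpha> * cnj (lookup Q \<alpha>))"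

lemma fischer_superset:
  "finite S \<Longrightarrow> keys P \<subseteq> S \<Longrightarrow> fischer P Q
      = (\<Sum>\<alpha>\<in>S. of_nat (exp_fact \<alpha>) * lookup P \<alpha> * cnj (lookup Q \<alpha>))"
  unfolding fischer_def by (rule sum.mono_neutral_left) (auto simp: in_keys_iff)

lemma fischer_zero_left [simp]: "fischer 0 Q = 0"
  by (simp add: fischer_def)

lemma fischer_zero_right [simp]: "fischer P 0 = 0"
  by (simp add: fischer_def)

lemma fischer_add_left: "fischer (A + B) Q = fischer A Q + fischer B Q"
proof -
  let ?S = "keys A \<union> keys B"
  have "keys (A + B) \<subseteq> ?S" by (auto simp: in_keys_iff lookup_add)
  then show ?thesis
    by (simp add: fischer_superset[of ?S] lookup_add algebra_simps sum.distrib)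
qed

lemma fischer_add_right: "fischer P (A + B) = fischer P A + fischer P B"
  by (simp add: fischer_def lookup_add algebra_simps sum.distrib)

lemma fischer_sum_left: "fischer (\<Sum>i\<in>I. f i) Q = (\<Sum>i\<in>I. fischer (f i) Q)"
  by (induction I rule: infinite_finite_induct) (simp_all add: fischer_add_left)

lemma fischer_sum_right: "fischer P (\<Sum>i\<in>I. f i) = (\<Sum>i\<in>I. fischer P (f i))"
  by (induction I rule: infinite_finite_induct) (simp_all add: fischer_add_right)

lemma fischer_pvar_mult: "fischer (pvar v * A) Q = fischer A (pd v Q)"
proof -
  let ?S = "(\<lambda>\<alpha>. \<alpha> + unitv v) ` keys A"
  have "keys (pvar v * A) \<subseteq> ?S"
  proof
    fix \<beta> assume "\<beta> \<in> keys (pvar v * A)"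
    then have v: "1 \<le> lookup \<beta> v" and "lookup A (\<beta> - unitv v) \<noteq> 0"
      by (auto simp: in_keys_iff lookup_pvar_mult split: if_splits)
    then show "\<beta> \<in> ?S"
      using minus_unitv_add[OF v]
      by (auto simp: in_keys_iff intro!: image_eqI[of _ _ "\<beta> - unitv v"])
  qed
  moreover have "inj_on (\<lambda>\<alpha>. \<alpha> + unitv v) (keys A)"
    by (auto simp: inj_on_def)
  ultimately have "fischer (pvar v * A) Q = (\<Sum>\<alpha>\<in>keys A. of_nat (exp_fact (\<alpha> + unitv v))
      * lookup (pvar v * A) (\<alpha> + unitv v) * cnj (lookup Q (\<alpha> + unitv v)))"
    by (simp add: fischer_superset[of ?S] sum.reindex)
  also have "\<dots> = (\<Sum>\<alpha>\<in>keys A. of_nat (exp_fact \<alpha>) * lookup A \<alpha> * cnj (lookup (pd v Q) \<alpha>))"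
    by (intro sum.cong refl)
      (simp add: exp_fact_add_unitv lookup_pvar_mult lookup_add lookup_pd, simp add: algebra_simps)
  finally show ?thesis
    unfolding fischer_def .
qed

lemma fischer_self_eq_0: assumes "fischer P P = 0" shows "P = 0"
proof -
  have "fischer P P = (\<Sum>\<alpha>\<in>keys P. of_real (real (exp_fact \<alpha>) * (cmod (lookup P \<alpha>))\<^sup>2))"
    unfolding fischer_def
    by (intro sum.cong refl)
      (simp only: of_real_mult complex_norm_square mult.assoc of_real_of_nat_eq)
  with assms have "(\<Sum>\<alpha>\<in>keys P. real (exp_fact \<alpha>) * (cmod (lookup P \<alpha>))\<^sup>2) = 0"
    by (simp only: of_real_sum[symmetric] of_real_eq_0_iff)
  then have "\<forall>\<alpha>\<in>keys P. real (exp_fact \<alpha>) * (cmod (lookup P \<alpha>))\<^sup>2 = 0"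
    by (subst (asm) sum_nonneg_eq_0_iff) auto
  moreover have "exp_fact \<alpha> \<noteq> 0" for \<alpha>
    by (simp add: exp_fact_def)
  ultimately show ?thesis
    by (intro poly_mapping_eqI) (auto simp: in_keys_iff)
qed

lemma fischer_contr_mult: "fischer (contr_mult m a a A) P = fischer A (contr_diff m a a P)"
  by (simp add: contr_mult_def contr_diff_def fischer_sum_left fischer_sum_right fischer_pvar_mult)

definition euler_x :: "nat \<Rightarrow> cpoly \<Rightarrow> cpoly" where
  "euler_x m P = (\<Sum>j<m. xvar j * dx j P)"

definition euler_u :: "nat \<Rightarrow> cpoly \<Rightarrow> cpoly" where
  "euler_u m P = (\<Sum>j<m. uvar m j * du m j P)"

lemma contr_diff_eq_ops:
  "contr_diff m 0 0 P = lap_x m P" "contr_diff m m m P = lap_u m P"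
  "contr_diff m m 0 P = du_dx m P" "contr_diff m 0 m P = du_dx m P"
  by (simp_all add: contr_diff_def lap_x_def lap_u_def du_dx_def dx_def du_def)
    (simp add: pd_commute)

lemma contr_field_eq_ops:
  "contr_field m m 0 P = u_dx m P" "contr_field m 0 m P = x_du m P"
  "contr_field m 0 0 P = euler_x m P" "contr_field m m m P = euler_u m P"
  by (simp_all add: contr_field_def u_dx_def x_du_def euler_x_def euler_u_def xvar_def uvar_def
    dx_def du_def)

lemma contr_mult_eq_ops:
  "contr_mult m 0 0 P = normx2 m * P" "contr_mult m m m P = normu2 m * P"
  "contr_mult m m 0 P = ux m * P" "contr_mult m 0 m P = ux m * P"
  by (simp_all add: contr_mult_def normx2_def normu2_def ux_def xvar_def uvar_def sum_distrib_right
      mult.assoc) (simp add: mult.left_commute[of "pvar _" "pvar (m + _)"])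

lemmas contr_eq_ops = contr_diff_eq_ops contr_field_eq_ops contr_mult_eq_ops

lemma linear_op_ops:
  "linear_op (lap_x m)" "linear_op (lap_u m)" "linear_op (du_dx m)"
  "linear_op (u_dx m)" "linear_op (x_du m)" "linear_op (euler_x m)" "linear_op (euler_u m)"
proof -
  have "lap_x m = contr_diff m 0 0" "lap_u m = contr_diff m m m" "du_dx m = contr_diff m m 0"
    "u_dx m = contr_field m m 0" "x_du m = contr_field m 0 m"
    "euler_x m = contr_field m 0 0" "euler_u m = contr_field m m m"
    by (simp_all add: fun_eq_iff contr_eq_ops)
  then show "linear_op (lap_x m)" "linear_op (lap_u m)" "linear_op (du_dx m)"
    "linear_op (u_dx m)" "linear_op (x_du m)" "linear_op (euler_x m)" "linear_op (euler_u m)"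
    by (simp_all only: linear_op_contr_diff linear_op_contr_field)
qed

lemmas ops_linear = linear_op_simps[OF linear_op_ops(1)] linear_op_simps[OF linear_op_ops(2)]
  linear_op_simps[OF linear_op_ops(3)] linear_op_simps[OF linear_op_ops(4)]
  linear_op_simps[OF linear_op_ops(5)] linear_op_simps[OF linear_op_ops(6)]
  linear_op_simps[OF linear_op_ops(7)]

lemma harm_zero: "harm m 0"
  by (simp add: harm_def ops_linear)

lemma harm_cst_mult: "harm m P \<Longrightarrow> harm m (cst c * P)"
  by (simp add: harm_def ops_linear)

text \<open>Since multiplication by a variable is adjoint to differentiation in it, harmonic polynomials
  are Fischer-orthogonal to the ideal generated by \<open>|x|\<^sup>2\<close> and \<open>|u|\<^sup>2\<close>.\<close>

lemma harmonic_in_ideal_eq_0: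
  assumes "harm m P" and "P = normx2 m * A + normu2 m * B"
  shows "P = 0"
proof (rule fischer_self_eq_0)
  have "fischer P P = fischer (normx2 m * A) P + fischer (normu2 m * B) P"
    by (subst (1) assms(2)) (simp add: fischer_add_left)
  with assms(1) show "fischer P P = 0"
    by (simp add: fischer_contr_mult[of m 0, unfolded contr_eq_ops]
        fischer_contr_mult[of m m, unfolded contr_eq_ops] harm_def)
qed

context
  fixes m :: nat
  assumes m_pos: "0 < m"
begin

lemma lap_x_ux_mult: "lap_x m (ux m * G) = ux m * lap_x m G + u_dx m G + u_dx m G"
  using contr_diff_contr_mult[of m 0 0 m 0 G] m_pos by (simp add: contr_eq_ops)

lemma lap_u_ux_mult: "lap_u m (ux m * G) = ux m * lap_u m G + x_du m G + x_du m G"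
  using contr_diff_contr_mult[of m m m m 0 G] m_pos by (simp add: contr_eq_ops)

lemma lap_x_normx2_mult:
  "lap_x m (normx2 m * G) = normx2 m * lap_x m G + 4 * euler_x m G + 2 * of_nat m * G"
  using contr_diff_contr_mult[of m 0 0 0 0 G] m_pos by (simp add: contr_eq_ops algebra_simps)

lemma lap_u_normu2_mult:
  "lap_u m (normu2 m * G) = normu2 m * lap_u m G + 4 * euler_u m G + 2 * of_nat m * G"
  using contr_diff_contr_mult[of m m m m m G] m_pos by (simp add: contr_eq_ops algebra_simps)

lemma lap_x_normu2_mult: "lap_x m (normu2 m * G) = normu2 m * lap_x m G"
  using contr_diff_contr_mult[of m 0 0 m m G] m_pos by (simp add: contr_eq_ops)

lemma lap_u_normx2_mult: "lap_u m (normx2 m * G) = normx2 m * lap_u m G"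
  using contr_diff_contr_mult[of m m m 0 0 G] m_pos by (simp add: contr_eq_ops)

lemma lap_x_u_dx: "lap_x m (u_dx m G) = u_dx m (lap_x m G)"
  using contr_diff_contr_field[of m 0 0 m 0 G] m_pos by (simp add: contr_eq_ops)

lemma lap_u_u_dx: "lap_u m (u_dx m G) = u_dx m (lap_u m G) + du_dx m G + du_dx m G"
  using contr_diff_contr_field[of m m m m 0 G] m_pos by (simp add: contr_eq_ops)

lemma lap_x_x_du: "lap_x m (x_du m G) = x_du m (lap_x m G) + du_dx m G + du_dx m G"
  using contr_diff_contr_field[of m 0 0 0 m G] m_pos by (simp add: contr_eq_ops)

lemma lap_u_x_du: "lap_u m (x_du m G) = x_du m (lap_u m G)"
  using contr_diff_contr_field[of m m m 0 m G] m_pos by (simp add: contr_eq_ops)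

lemma lap_x_du_dx: "lap_x m (du_dx m G) = du_dx m (lap_x m G)"
  using contr_diff_contr_diff[of m 0 0 m 0 G] by (simp add: contr_eq_ops)

lemma lap_u_du_dx: "lap_u m (du_dx m G) = du_dx m (lap_u m G)"
  using contr_diff_contr_diff[of m m m m 0 G] by (simp add: contr_eq_ops)

lemma euler_x_u_dx: "euler_x m (u_dx m G) = u_dx m (euler_x m G) - u_dx m G"
  using contr_field_contr_field[of m 0 0 m 0 G] m_pos by (simp add: contr_eq_ops)

lemma euler_u_x_du: "euler_u m (x_du m G) = x_du m (euler_u m G) - x_du m G"
  using contr_field_contr_field[of m m m 0 m G] m_pos by (simp add: contr_eq_ops)

lemma euler_x_du_dx: "euler_x m (du_dx m G) = du_dx m (euler_x m G) - du_dx m G"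
  using contr_diff_contr_field[of m m 0 0 0 G] m_pos by (simp add: contr_eq_ops algebra_simps)

lemma euler_u_du_dx: "euler_u m (du_dx m G) = du_dx m (euler_u m G) - du_dx m G"
  using contr_diff_contr_field[of m m 0 m m G] m_pos by (simp add: contr_eq_ops algebra_simps)

lemma euler_x_normu2_mult: "euler_x m (normu2 m * G) = normu2 m * euler_x m G"
  using contr_field_contr_mult[of m 0 0 m m G] m_pos by (simp add: contr_eq_ops)

lemma u_dx_ux_mult: "u_dx m (ux m * G) = ux m * u_dx m G + normu2 m * G"
  using contr_field_contr_mult[of m m 0 m 0 G] m_pos by (simp add: contr_eq_ops)

lemma u_dx_normx2_mult: "u_dx m (normx2 m * G) = normx2 m * u_dx m G + ux m * G + ux m * G"
  using contr_field_contr_mult[of m m 0 0 0 G] m_pos by (simp add: contr_eq_ops)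

lemma u_dx_normu2_mult: "u_dx m (normu2 m * G) = normu2 m * u_dx m G"
  using contr_field_contr_mult[of m m 0 m m G] m_pos by (simp add: contr_eq_ops)

end

lemma euler_x_bihom:
  assumes "bihom m p q G"
  shows "euler_x m G = of_nat p * G"
proof (rule poly_mapping_eqI)
  fix \<beta>
  have "lookup (euler_x m G) \<beta> = of_nat (\<Sum>j<m. lookup \<beta> j) * lookup G \<beta>"
    by (simp add: euler_x_def xvar_def dx_def lookup_sum lookup_pvar_mult_pd sum_distrib_right)
  also have "\<dots> = of_nat p * lookup G \<beta>"
    using assms by (cases "lookup G \<beta> = 0") (auto simp: bihom_iff has_bidegree_def)
  finally show "lookup (euler_x m G) \<beta> = lookup (of_nat p * G) \<beta>"
    by (simp add: lookup_of_nat_mult)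
qed

lemma euler_u_bihom:
  assumes "bihom m p q G"
  shows "euler_u m G = of_nat q * G"
proof (rule poly_mapping_eqI)
  fix \<beta>
  have "lookup (euler_u m G) \<beta> = of_nat (\<Sum>j<m. lookup \<beta> (m + j)) * lookup G \<beta>"
    by (simp add: euler_u_def uvar_def du_def lookup_sum lookup_pvar_mult_pd sum_distrib_right)
  also have "\<dots> = of_nat q * lookup G \<beta>"
    using assms by (cases "lookup G \<beta> = 0") (auto simp: bihom_iff has_bidegree_def)
  finally show "lookup (euler_u m G) \<beta> = lookup (of_nat q * G) \<beta>"
    by (simp add: lookup_of_nat_mult)
qed

lemma bihom_xvar_mult: "j < m \<Longrightarrow> bihom m p q G \<Longrightarrow> bihom m (p + 1) q (xvar j * G)"
  using bihom_pvar_mult[of j m p q G] by (simp add: xvar_def)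

lemma bihom_uvar_mult: "j < m \<Longrightarrow> bihom m p q G \<Longrightarrow> bihom m p (q + 1) (uvar m j * G)"
  using bihom_pvar_mult[of "m + j" m p q G] by (simp add: uvar_def)

lemma bihom_dx: "j < m \<Longrightarrow> bihom m p q G \<Longrightarrow> bihom m (p - 1) q (dx j G)"
  using bihom_pd[of j m p q G] by (simp add: dx_def)

lemma bihom_du: "j < m \<Longrightarrow> bihom m p q G \<Longrightarrow> bihom m p (q - 1) (du m j G)"
  using bihom_pd[of "m + j" m p q G] by (simp add: du_def)

lemma bihom_ux_mult: "bihom m p q G \<Longrightarrow> bihom m (p + 1) (q + 1) (ux m * G)"
  unfolding ux_def sum_distrib_right mult.assoc
  by (intro bihom_sum bihom_uvar_mult bihom_xvar_mult) auto

lemma bihom_normx2_mult: "bihom m p q G \<Longrightarrow> bihom m (p + 2) q (normx2 m * G)"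
  unfolding normx2_def sum_distrib_right mult.assoc
  using bihom_xvar_mult[of _ m "p + 1"] bihom_xvar_mult[of _ m p]
  by (intro bihom_sum) (simp add: numeral_2_eq_2)

lemma bihom_normu2_mult: "bihom m p q G \<Longrightarrow> bihom m p (q + 2) (normu2 m * G)"
  unfolding normu2_def sum_distrib_right mult.assoc
  using bihom_uvar_mult[of _ m p "q + 1"] bihom_uvar_mult[of _ m p q]
  by (intro bihom_sum) (simp add: numeral_2_eq_2)

lemma bihom_normx2_mult_pred:
  "bihom m (p - 1) q X \<Longrightarrow> (p = 0 \<Longrightarrow> X = 0) \<Longrightarrow> bihom m (p + 1) q (normx2 m * X)"
  using bihom_normx2_mult[of m "p - 1" q X] by (cases p) simp_all

lemma bihom_normu2_mult_pred:
  "bihom m p (q - 1) X \<Longrightarrow> (q = 0 \<Longrightarrow> X = 0) \<Longrightarrow> bihom m p (q + 1) (normu2 m * X)"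
  using bihom_normu2_mult[of m p "q - 1" X] by (cases q) simp_all

lemma bihom_u_dx: "bihom m p q G \<Longrightarrow> bihom m (p - 1) (q + 1) (u_dx m G)"
  unfolding u_dx_def by (intro bihom_sum bihom_uvar_mult bihom_dx) auto

lemma bihom_x_du: "bihom m p q G \<Longrightarrow> bihom m (p + 1) (q - 1) (x_du m G)"
  unfolding x_du_def by (intro bihom_sum bihom_xvar_mult bihom_du) auto

lemma bihom_du_dx: "bihom m p q G \<Longrightarrow> bihom m (p - 1) (q - 1) (du_dx m G)"
  unfolding du_dx_def by (intro bihom_sum bihom_du bihom_dx) auto

lemma u_dx_eq_0: "bihom m 0 q G \<Longrightarrow> u_dx m G = 0"
  unfolding u_dx_def dx_def by (intro sum.neutral) (simp add: pd_eq_0_of_bihom[of _ m 0 q G])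

lemma x_du_eq_0: "bihom m p 0 G \<Longrightarrow> x_du m G = 0"
  unfolding x_du_def du_def by (intro sum.neutral) (simp add: pd_eq_0_of_bihom[of _ m p 0 G])

lemma du_dx_eq_0:
  assumes "bihom m p q G" "p = 0 \<or> q = 0"
  shows "du_dx m G = 0"
  unfolding du_dx_def dx_def du_def
proof (intro sum.neutral ballI)
  fix j assume j: "j \<in> {..<m}"
  show "pd (m + j) (pd j G) = 0"
  proof (cases "p = 0")
    case True
    with j assms(1) show ?thesis by (simp add: pd_eq_0_of_bihom[of _ m 0 q G])
  next
    case False
    with assms have "bihom m (p - 1) 0 (pd j G)" using j bihom_pd[of j m p q G] by simp
    with j show ?thesis by (simp add: pd_eq_0_of_bihom[of _ m "p - 1" 0])
  qed
qed

section \<open>The projection \<open>\<pi>\<^sub>s\<close>\<close>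

lemma sum_bidegree_split:
  "\<exists>X Y. (\<Sum>a\<le>A. \<Sum>b\<le>B. normx2 m ^ a * normu2 m ^ b * G a b) = G 0 0 + normx2 m * X + normu2 m * Y"
proof -
  have "(\<Sum>a\<le>A. \<Sum>b\<le>B. normx2 m ^ a * normu2 m ^ b * G a b)
      = G 0 0 + normx2 m * (\<Sum>a<A. \<Sum>b\<le>B. normx2 m ^ a * normu2 m ^ b * G (Suc a) b)
        + normu2 m * (\<Sum>b<B. normu2 m ^ b * G 0 (Suc b))"
    by (simp add: sum.atMost_shift sum_distrib_left distrib_left mult.assoc)
  then show ?thesis by blast
qed

lemma sum_atMost_supp_le_1:
  assumes "\<And>a. 2 \<le> a \<Longrightarrow> f a = 0"
  shows "(\<Sum>a\<le>(A::nat). f a) = f 0 + (if 1 \<le> A then f 1 else (0::cpoly))"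
proof (cases "1 \<le> A")
  case True
  with assms have "(\<Sum>a\<le>A. f a) = (\<Sum>a\<in>{0, 1}. f a)"
    by (intro sum.mono_neutral_right) auto
  with True show ?thesis by simp
next
  case False
  then have "A = 0" by simp
  then show ?thesis by simp
qed

lemma harmonic_part_unique:
  assumes "harm m H1" "harm m H2"
    and "H1 + normx2 m * A1 + normu2 m * B1 = H2 + normx2 m * A2 + normu2 m * B2"
  shows "H1 = H2"
proof -
  have "H1 - H2 = normx2 m * (A2 - A1) + normu2 m * (B2 - B1)"
    using assms(3) by (simp add: algebra_simps)
  moreover have "harm m (H1 - H2)"
    using assms(1,2) by (simp add: harm_def ops_linear)
  ultimately show ?thesis
    using harmonic_in_ideal_eq_0 by fastforce
qed

text \<open>The higher components of the decomposition defining \<open>\<pi>\<^sub>s\<close> may be taken to be zero, so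
  four terms suffice.\<close>

lemma decomposition_of_four_terms:
  assumes Z: "Z = G0 + normx2 m * G10 + normu2 m * G01 + normx2 m * normu2 m * G11"
    and harm: "harm m G0" "harm m G10" "harm m G01" "harm m G11"
    and bihom: "bihom m p q G0" "bihom m (p - 2) q G10" "bihom m p (q - 2) G01"
      "bihom m (p - 2) (q - 2) G11"
    and low_degree: "p < 2 \<Longrightarrow> G10 = 0 \<and> G11 = 0" "q < 2 \<Longrightarrow> G01 = 0 \<and> G11 = 0"
  shows "\<exists>G. (\<forall>a\<le>p div 2. \<forall>b\<le>q div 2. bihom m (p - 2*a) (q - 2*b) (G a b) \<and> harm m (G a b))
      \<and> Z = (\<Sum>a\<le>p div 2. \<Sum>b\<le>q div 2. normx2 m ^ a * normu2 m ^ b * G a b) \<and> G0 = G 0 0"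
proof (intro exI conjI)
  define G where "G a b = (if a = 0 \<and> b = 0 then G0 else if a = 1 \<and> b = 0 then G10
     else if a = 0 \<and> b = 1 then G01 else if a = 1 \<and> b = 1 then G11 else 0)" for a b :: nat
  show "\<forall>a\<le>p div 2. \<forall>b\<le>q div 2. bihom m (p - 2*a) (q - 2*b) (G a b) \<and> harm m (G a b)"
    using harm bihom by (auto simp: G_def harm_def ops_linear)
  have inner: "(\<Sum>b\<le>q div 2. normx2 m ^ a * normu2 m ^ b * G a b)
      = normx2 m ^ a * G a 0 + (if 1 \<le> q div 2 then normx2 m ^ a * normu2 m * G a 1 else 0)" for a
    by (subst sum_atMost_supp_le_1) (auto simp: G_def)
  have "(\<Sum>a\<le>p div 2. \<Sum>b\<le>q div 2. normx2 m ^ a * normu2 m ^ b * G a b)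
     = G 0 0 + (if 1 \<le> q div 2 then normu2 m * G 0 1 else 0)
       + (if 1 \<le> p div 2
          then normx2 m * G 1 0 + (if 1 \<le> q div 2 then normx2 m * normu2 m * G 1 1 else 0) else 0)"
    unfolding inner by (subst sum_atMost_supp_le_1) (auto simp: G_def)
  also have "\<dots> = Z"
    using low_degree unfolding Z by (auto simp: G_def)
  finally show "Z = (\<Sum>a\<le>p div 2. \<Sum>b\<le>q div 2. normx2 m ^ a * normu2 m ^ b * G a b)" ..
  show "G0 = G 0 0"
    by (simp add: G_def)
qed

lemma pi_s_eqI:
  assumes "bihom m p q Z"
    and Z: "Z = G0 + normx2 m * G10 + normu2 m * G01 + normx2 m * normu2 m * G11"
    and harm: "harm m G0" "harm m G10" "harm m G01" "harm m G11"
    and "bihom m p q G0" "bihom m (p - 2) q G10" "bihom m p (q - 2) G01"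
      "bihom m (p - 2) (q - 2) G11"
    and "p < 2 \<Longrightarrow> G10 = 0 \<and> G11 = 0" "q < 2 \<Longrightarrow> G01 = 0 \<and> G11 = 0"
  shows "pi_s m Z = G0"
  unfolding pi_s_def
proof (rule the_equality)
  show "\<exists>p q G. bihom m p q Z
      \<and> (\<forall>a\<le>p div 2. \<forall>b\<le>q div 2. bihom m (p - 2*a) (q - 2*b) (G a b) \<and> harm m (G a b))
      \<and> Z = (\<Sum>a\<le>p div 2. \<Sum>b\<le>q div 2. normx2 m ^ a * normu2 m ^ b * G a b) \<and> G0 = G 0 0"
    using assms(1) decomposition_of_four_terms[OF assms(2-)] by blast
next
  fix h assume "\<exists>p q G. bihom m p q Z
      \<and> (\<forall>a\<le>p div 2. \<forall>b\<le>q div 2. bihom m (p - 2*a) (q - 2*b) (G a b) \<and> harm m (G a b))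
      \<and> Z = (\<Sum>a\<le>p div 2. \<Sum>b\<le>q div 2. normx2 m ^ a * normu2 m ^ b * G a b) \<and> h = G 0 0"
  then obtain p' q' G where "harm m h"
    and "Z = (\<Sum>a\<le>p' div 2. \<Sum>b\<le>q' div 2. normx2 m ^ a * normu2 m ^ b * G a b)" "h = G 0 0"
    by fastforce
  moreover obtain X Y where "(\<Sum>a\<le>p' div 2. \<Sum>b\<le>q' div 2. normx2 m ^ a * normu2 m ^ b * G a b)
      = G 0 0 + normx2 m * X + normu2 m * Y"
    using sum_bidegree_split by blast
  ultimately have "h + normx2 m * X + normu2 m * Y
      = G0 + normx2 m * (G10 + normu2 m * G11) + normu2 m * G01"
    using Z by (simp add: algebra_simps)
  with \<open>harm m h\<close> harm(1) show "h = G0"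
    by (rule harmonic_part_unique)
qed

section \<open>Closed forms of \<open>C\<close> and \<open>S\<^sub>u\<close> on harmonic polynomials\<close>

text \<open>For harmonic \<open>h\<close> of \<open>x\<close>-degree \<open>n\<close> one has \<open>\<Delta>\<^sub>x(|x|\<^sup>2 h) = 2 \<mu>\<^sub>n\<^sub>+\<^sub>1 h\<close>; the polynomials
  \<open>\<langle>u,\<partial>\<^sub>x\<rangle>Y\<close> and \<open>\<langle>\<partial>\<^sub>u,\<partial>\<^sub>x\<rangle>Y\<close> met below have \<open>x\<close>-degree one less than \<open>Y\<close>.\<close>

definition mu :: "nat \<Rightarrow> nat \<Rightarrow> complex" where
  "mu m n = of_nat m + 2 * of_nat n - 2"

definition C_explicit :: "nat \<Rightarrow> nat \<Rightarrow> nat \<Rightarrow> cpoly \<Rightarrow> cpoly" where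
  "C_explicit m p q Y = ux m * Y - cst (1 / mu m p) * (normx2 m * u_dx m Y)
     - cst (1 / mu m q) * (normu2 m * x_du m Y)
     + cst (1 / mu m p * (1 / mu m q)) * (normx2 m * (normu2 m * du_dx m Y))"

definition S_explicit :: "nat \<Rightarrow> nat \<Rightarrow> cpoly \<Rightarrow> cpoly" where
  "S_explicit m q Y = u_dx m Y - cst (1 / mu m q) * (normu2 m * du_dx m Y)"

lemma euler_coefficient_eq_mu:
  "4 * (of_nat p * X - X) + 2 * of_nat m * X = cst (2 * mu m p) * (X::cpoly)"
  by (rule poly_mapping_eqI)
    (simp only: mult.assoc[of 2] lookup_linear, simp add: mu_def algebra_simps)

lemma bihom_C_explicit:
  assumes Y: "bihom m p q Y"
  shows "bihom m (p + 1) (q + 1) (C_explicit m p q Y)"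
proof -
  have "bihom m (p + 1) (q + 1) (normx2 m * u_dx m Y)"
    using Y by (intro bihom_normx2_mult_pred bihom_u_dx) (auto simp: u_dx_eq_0)
  moreover have "bihom m (p + 1) (q + 1) (normu2 m * x_du m Y)"
    using Y by (intro bihom_normu2_mult_pred bihom_x_du) (auto simp: x_du_eq_0)
  moreover have "bihom m (p - 1) (q + 1) (normu2 m * du_dx m Y)"
    using Y by (intro bihom_normu2_mult_pred bihom_du_dx) (auto simp: du_dx_eq_0)
  then have "bihom m (p + 1) (q + 1) (normx2 m * (normu2 m * du_dx m Y))"
    using Y by (intro bihom_normx2_mult_pred) (auto simp: du_dx_eq_0)
  ultimately show ?thesis
    unfolding C_explicit_def using Y
    by (intro bihom_add bihom_diff bihom_cst_mult bihom_ux_mult)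
qed

lemma bihom_S_explicit:
  assumes "bihom m p q Y"
  shows "bihom m (p - 1) (q + 1) (S_explicit m q Y)"
  unfolding S_explicit_def using assms
  by (intro bihom_diff bihom_cst_mult bihom_u_dx bihom_normu2_mult_pred bihom_du_dx)
    (auto simp: du_dx_eq_0)

context
  fixes m :: nat
  assumes m_gt_2: "2 < m"
begin

lemma mu_nonzero: "mu m n \<noteq> 0"
proof -
  have "of_nat (m + 2 * n - 2) = mu m n"
    using m_gt_2 by (simp add: mu_def of_nat_diff)
  moreover have "(of_nat (m + 2 * n - 2) :: complex) \<noteq> 0"
    using m_gt_2 by (simp only: of_nat_eq_0_iff)
  ultimately show ?thesis
    by metis
qed

context
  fixes p q :: nat and Y :: cpoly
  assumes Y: "bihom m p q Y" "harm m Y"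
begin

lemma lap_ux_mult_harm:
  "lap_x m (ux m * Y) = u_dx m Y + u_dx m Y" "lap_u m (ux m * Y) = x_du m Y + x_du m Y"
  using Y m_gt_2 by (simp_all add: lap_x_ux_mult lap_u_ux_mult harm_def)

lemma lap_u_dx_harm: "lap_x m (u_dx m Y) = 0" "lap_u m (u_dx m Y) = du_dx m Y + du_dx m Y"
  using Y m_gt_2 by (simp_all add: lap_x_u_dx lap_u_u_dx harm_def ops_linear)

lemma lap_x_du_harm: "lap_x m (x_du m Y) = du_dx m Y + du_dx m Y" "lap_u m (x_du m Y) = 0"
  using Y m_gt_2 by (simp_all add: lap_x_x_du lap_u_x_du harm_def ops_linear)

lemma harm_du_dx: "harm m (du_dx m Y)"
  using Y m_gt_2 by (simp add: harm_def lap_x_du_dx lap_u_du_dx ops_linear)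

lemma lap_x_normx2_u_dx: "lap_x m (normx2 m * u_dx m Y) = cst (2 * mu m p) * u_dx m Y"
proof -
  have "lap_x m (normx2 m * u_dx m Y) = 4 * (of_nat p * u_dx m Y - u_dx m Y)
      + 2 * of_nat m * u_dx m Y"
    using Y m_gt_2 lap_u_dx_harm
    by (simp add: lap_x_normx2_mult euler_x_u_dx euler_x_bihom ops_linear)
  then show ?thesis
    by (simp only: euler_coefficient_eq_mu)
qed

lemma lap_u_normu2_x_du: "lap_u m (normu2 m * x_du m Y) = cst (2 * mu m q) * x_du m Y"
proof -
  have "lap_u m (normu2 m * x_du m Y) = 4 * (of_nat q * x_du m Y - x_du m Y)
      + 2 * of_nat m * x_du m Y"
    using Y m_gt_2 lap_x_du_harm
    by (simp add: lap_u_normu2_mult euler_u_x_du euler_u_bihom ops_linear)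
  then show ?thesis
    by (simp only: euler_coefficient_eq_mu)
qed

lemma lap_x_normx2_du_dx: "lap_x m (normx2 m * du_dx m Y) = cst (2 * mu m p) * du_dx m Y"
proof -
  have "lap_x m (normx2 m * du_dx m Y) = 4 * (of_nat p * du_dx m Y - du_dx m Y)
      + 2 * of_nat m * du_dx m Y"
    using Y m_gt_2 harm_du_dx
    by (simp add: lap_x_normx2_mult euler_x_du_dx euler_x_bihom ops_linear harm_def)
  then show ?thesis
    by (simp only: euler_coefficient_eq_mu)
qed

lemma lap_u_normu2_du_dx: "lap_u m (normu2 m * du_dx m Y) = cst (2 * mu m q) * du_dx m Y"
proof -
  have "lap_u m (normu2 m * du_dx m Y) = 4 * (of_nat q * du_dx m Y - du_dx m Y)
      + 2 * of_nat m * du_dx m Y"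
    using Y m_gt_2 harm_du_dx
    by (simp add: lap_u_normu2_mult euler_u_du_dx euler_u_bihom ops_linear harm_def)
  then show ?thesis
    by (simp only: euler_coefficient_eq_mu)
qed

lemma lap_x_normx2_normu2_du_dx:
  "lap_x m (normx2 m * (normu2 m * du_dx m Y)) = cst (2 * mu m p) * (normu2 m * du_dx m Y)"
proof -
  have "lap_x m (normx2 m * (normu2 m * du_dx m Y))
      = 4 * (of_nat p * (normu2 m * du_dx m Y) - normu2 m * du_dx m Y)
      + 2 * of_nat m * (normu2 m * du_dx m Y)"
    using Y m_gt_2 harm_du_dx
    by (simp add: lap_x_normx2_mult lap_x_normu2_mult euler_x_normu2_mult euler_x_du_dx
      euler_x_bihom
        ops_linear harm_def) (simp add: algebra_simps)
  then show ?thesis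
    by (simp only: euler_coefficient_eq_mu)
qed

lemma lap_u_normx2_normu2_du_dx:
  "lap_u m (normx2 m * (normu2 m * du_dx m Y)) = cst (2 * mu m q) * (normx2 m * du_dx m Y)"
  using m_gt_2 by (simp add: lap_u_normx2_mult lap_u_normu2_du_dx)

lemma lap_x_normu2_x_du:
  "lap_x m (normu2 m * x_du m Y) = normu2 m * du_dx m Y + normu2 m * du_dx m Y"
  using m_gt_2 by (simp add: lap_x_normu2_mult lap_x_du_harm distrib_left)

lemma lap_u_normx2_u_dx:
  "lap_u m (normx2 m * u_dx m Y) = normx2 m * du_dx m Y + normx2 m * du_dx m Y"
  using m_gt_2 by (simp add: lap_u_normx2_mult lap_u_dx_harm distrib_left)

lemma harm_S_explicit: "harm m (S_explicit m q Y)"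
proof -
  have "lap_x m (S_explicit m q Y) = 0"
    using m_gt_2 harm_du_dx
    by (simp add: S_explicit_def ops_linear lap_u_dx_harm lap_x_normu2_mult harm_def)
  moreover have "lap_u m (S_explicit m q Y) = 0"
    unfolding S_explicit_def ops_linear lap_u_dx_harm lap_u_normu2_du_dx
    by (rule poly_mapping_eqI) (simp only: lookup_linear, simp add: mu_nonzero)
  ultimately show ?thesis
    by (simp add: harm_def)
qed

lemma harm_S_explicit_x: "harm m (x_du m Y - cst (1 / mu m p) * (normx2 m * du_dx m Y))"
proof -
  have "lap_u m (x_du m Y - cst (1 / mu m p) * (normx2 m * du_dx m Y)) = 0"
    using m_gt_2 harm_du_dx
    by (simp add: ops_linear lap_x_du_harm lap_u_normx2_mult harm_def)
  moreover have "lap_x m (x_du m Y - cst (1 / mu m p) * (normx2 m * du_dx m Y)) = 0"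
    unfolding ops_linear lap_x_du_harm lap_x_normx2_du_dx
    by (rule poly_mapping_eqI) (simp only: lookup_linear, simp add: mu_nonzero)
  ultimately show ?thesis
    by (simp add: harm_def)
qed

lemma harm_C_explicit: "harm m (C_explicit m p q Y)"
proof -
  have "lap_x m (C_explicit m p q Y) = 0"
    unfolding C_explicit_def ops_linear lap_ux_mult_harm lap_x_normx2_u_dx lap_x_normu2_x_du
      lap_x_normx2_normu2_du_dx
    by (rule poly_mapping_eqI) (simp only: lookup_linear, simp add: field_simps mu_nonzero)
  moreover have "lap_u m (C_explicit m p q Y) = 0"
    unfolding C_explicit_def ops_linear lap_ux_mult_harm lap_u_normx2_u_dx lap_u_normu2_x_du
      lap_u_normx2_normu2_du_dx
    by (rule poly_mapping_eqI) (simp only: lookup_linear, simp add: field_simps mu_nonzero)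
  ultimately show ?thesis
    by (simp add: harm_def)
qed

lemma S_u_eq_S_explicit: "S_u m Y = S_explicit m q Y"
proof -
  define G01 where "G01 = cst (1 / mu m q) * du_dx m Y"
  have eq: "u_dx m Y = S_explicit m q Y + normx2 m * 0 + normu2 m * G01 + normx2 m * normu2 m * 0"
    by (simp add: S_explicit_def G01_def mult.left_commute)
  have "bihom m (p - 1) (q + 1 - 2) G01"
    unfolding G01_def using bihom_cst_mult[OF bihom_du_dx[OF Y(1)]] by simp
  moreover have "q + 1 < 2 \<Longrightarrow> G01 = 0"
    using Y(1) by (simp add: G01_def du_dx_eq_0)
  ultimately show ?thesis
    unfolding S_u_def G01_def
    by (intro pi_s_eqI[OF bihom_u_dx[OF Y(1)] eq[unfolded G01_def] harm_S_explicit harm_zero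
          harm_cst_mult[OF harm_du_dx] harm_zero bihom_S_explicit[OF Y(1)] bihom_zero _ bihom_zero])
      simp_all
qed

lemma C_op_eq_C_explicit: "C_op m Y = C_explicit m p q Y"
proof -
  define G10 where "G10 = cst (1 / mu m p) * S_explicit m q Y"
  define G01 where "G01 = cst (1 / mu m q) * (x_du m Y - cst (1 / mu m p) * (normx2 m * du_dx m Y))"
  define G11 where "G11 = cst (1 / mu m p * (1 / mu m q)) * du_dx m Y"
  have eq: "ux m * Y = C_explicit m p q Y + normx2 m * G10 + normu2 m * G01
      + normx2 m * normu2 m * G11"
    unfolding C_explicit_def S_explicit_def G10_def G01_def G11_def cst_mult[symmetric]
    by (simp add: algebra_simps)
  have harm: "harm m G10" "harm m G01" "harm m G11"
    unfolding G10_def G01_def G11_def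
    by (intro harm_cst_mult harm_S_explicit harm_S_explicit_x harm_du_dx)+
  have b10: "bihom m (p + 1 - 2) (q + 1) G10"
    unfolding G10_def using bihom_cst_mult[OF bihom_S_explicit[OF Y(1)]] by simp
  have "bihom m (p + 1) (q - 1) (normx2 m * du_dx m Y)"
    using Y(1) by (intro bihom_normx2_mult_pred bihom_du_dx) (auto simp: du_dx_eq_0)
  then have b01: "bihom m (p + 1) (q + 1 - 2) G01"
    unfolding G01_def using bihom_x_du[OF Y(1)] by (simp add: bihom_cst_mult bihom_diff)
  have b11: "bihom m (p + 1 - 2) (q + 1 - 2) G11"
    unfolding G11_def using bihom_cst_mult[OF bihom_du_dx[OF Y(1)]] by simp
  have low: "p + 1 < 2 \<Longrightarrow> G10 = 0 \<and> G11 = 0" "q + 1 < 2 \<Longrightarrow> G01 = 0 \<and> G11 = 0"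
    using Y(1) by (auto simp: G10_def G11_def G01_def S_explicit_def u_dx_eq_0 x_du_eq_0 du_dx_eq_0)
  show ?thesis
    unfolding C_op_def
    by (rule pi_s_eqI[OF bihom_ux_mult[OF Y(1)] eq harm_C_explicit harm bihom_C_explicit[OF Y(1)]
          b10 b01 b11 low])
qed

end

end

lemma C_op_harm_bihom:
  assumes "2 < m" "bihom m p q Y" "harm m Y"
  shows "harm m (C_op m Y)" "bihom m (p + 1) (q + 1) (C_op m Y)"
  using C_op_eq_C_explicit[OF assms] harm_C_explicit[OF assms] bihom_C_explicit[OF assms(2)]
  by simp_all

lemma C_op_pow_harm_bihom:
  assumes "2 < m" "bihom m p q X" "harm m X"
  shows "harm m ((C_op m ^^ i) X) \<and> bihom m (p + i) (q + i) ((C_op m ^^ i) X)"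
proof (induction i)
  case 0
  show ?case using assms by simp
next
  case (Suc i)
  then show ?case
    using C_op_harm_bihom[OF assms(1), of "p + i" "q + i" "(C_op m ^^ i) X"] by simp
qed

lemma S_u_harm_bihom:
  assumes "2 < m" "bihom m p q Y" "harm m Y"
  shows "harm m (S_u m Y)" "bihom m (p - 1) (q + 1) (S_u m Y)"
  using S_u_eq_S_explicit[OF assms] harm_S_explicit[OF assms] bihom_S_explicit[OF assms(2)]
  by simp_all

lemma S_u_pow_harm_bihom:
  assumes "2 < m" "bihom m k l H" "harm m H"
  shows "bihom m (k - j) (l + j) ((S_u m ^^ j) H) \<and> harm m ((S_u m ^^ j) H)"
proof (induction j)
  case 0
  show ?case using assms by simp
next
  case (Suc j)
  then have "bihom m (k - j - 1) (l + j + 1) (S_u m ((S_u m ^^ j) H))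
      \<and> harm m (S_u m ((S_u m ^^ j) H))"
    using S_u_harm_bihom[OF assms(1), of "k - j" "l + j" "(S_u m ^^ j) H"] by simp
  then show ?case
    by simp
qed

section \<open>Iterates of \<open>C\<close>\<close>

lemma u_dx_ux_pow_mult:
  assumes "0 < m"
  shows "\<exists>W. u_dx m (ux m ^ i * X) = ux m ^ i * u_dx m X + normu2 m * W"
proof (induction i)
  case 0
  show ?case by (intro exI[of _ 0]) simp
next
  case (Suc i)
  then obtain W where W: "u_dx m (ux m ^ i * X) = ux m ^ i * u_dx m X + normu2 m * W"
    by blast
  have "u_dx m (ux m ^ Suc i * X) = ux m * u_dx m (ux m ^ i * X) + normu2 m * (ux m ^ i * X)"
    using u_dx_ux_mult[OF assms] by (simp add: mult.assoc)
  also have "\<dots> = ux m ^ Suc i * u_dx m X + normu2 m * (ux m * W + ux m ^ i * X)"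
    unfolding W by (simp add: algebra_simps)
  finally show ?case by blast
qed

lemma u_dx_leading_terms:
  assumes "0 < m"
    and Y: "Y = ux m ^ Suc k * X + cst a * (normx2 m * (ux m ^ k * u_dx m X))
              + normx2 m * (normx2 m * A) + normu2 m * B"
  shows "\<exists>P1 P2. u_dx m Y = cst (1 + 2 * a) * (ux m ^ Suc k * u_dx m X) + normx2 m * P1
      + normu2 m * P2"
proof -
  obtain W1 where W1: "u_dx m (ux m ^ Suc k * X) = ux m ^ Suc k * u_dx m X + normu2 m * W1"
    using u_dx_ux_pow_mult[OF assms(1)] by blast
  obtain W2 where W2: "u_dx m (ux m ^ k * u_dx m X) = ux m ^ k * u_dx m (u_dx m X) + normu2 m * W2"
    using u_dx_ux_pow_mult[OF assms(1)] by blast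
  have "u_dx m (normx2 m * (ux m ^ k * u_dx m X))
      = normx2 m * (ux m ^ k * u_dx m (u_dx m X) + normu2 m * W2) + ux m ^ Suc k * u_dx m X
      + ux m ^ Suc k * u_dx m X"
    unfolding u_dx_normx2_mult[OF assms(1)] W2 by (simp add: mult.assoc)
  moreover have "u_dx m (normx2 m * (normx2 m * A))
      = normx2 m * (normx2 m * u_dx m A + 4 * (ux m * A))"
    unfolding u_dx_normx2_mult[OF assms(1)] by (simp add: algebra_simps)
  ultimately have "u_dx m Y = cst (1 + 2 * a) * (ux m ^ Suc k * u_dx m X)
      + normx2 m * (cst a * (ux m ^ k * u_dx m (u_dx m X) + normu2 m * W2)
      + (normx2 m * u_dx m A + 4 * (ux m * A)))
      + normu2 m * (W1 + u_dx m B)"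
    unfolding Y ops_linear W1 u_dx_normu2_mult[OF assms(1)]
    by (simp add: algebra_simps single_add cst_mult[symmetric])
  then show ?thesis by blast
qed

definition beta :: "nat \<Rightarrow> nat \<Rightarrow> nat \<Rightarrow> complex" where
  "beta m p i = (of_nat m + 2 * of_nat p - 4) / (of_nat m + 2 * of_nat p + 2 * of_nat i - 4)"

text \<open>\<open>alpha m p i\<close> is the coefficient of \<open>|x|\<^sup>2\<langle>u,x\<rangle>\<^sup>i\<^sup>-\<^sup>1\<langle>u,\<partial>\<^sub>x\<rangle>X\<close> in \<open>C\<^sup>iX\<close>, modulo
  \<open>|x|\<^sup>4\<close> and \<open>|u|\<^sup>2\<close>.\<close>

definition alpha :: "nat \<Rightarrow> nat \<Rightarrow> nat \<Rightarrow> complex" where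
  "alpha m p i = (beta m p i - 1) / 2"

lemma hx_eig_ratio_eq_beta:
  assumes "j \<le> k"
  shows "(let h = hx_eig m (int k + int i - int j - 1) in (h + of_nat i + 1) / (h + 1))
      = beta m (k - j) i"
proof -
  define p where "p = k - j"
  have "of_int (int k + int i - int j - 1) = (of_nat p + of_nat i - 1 :: complex)"
    using assms unfolding p_def by (simp add: of_nat_diff)
  then have h: "hx_eig m (int k + int i - int j - 1) = - (of_nat p + of_nat i - 1 + of_nat m / 2)"
    unfolding hx_eig_def by (simp add: algebra_simps)
  have num: "- (of_nat p + of_nat i - 1 + of_nat m / 2) + of_nat i + 1 =
      - (of_nat m + 2 * of_nat p - 4) / (2::complex)"
    by (simp add: field_simps)
  have den: "- (of_nat p + of_nat i - 1 + of_nat m / 2) + 1 =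
      - (of_nat m + 2 * of_nat p + 2 * of_nat i - 4) / (2::complex)"
    by (simp add: field_simps)
  have "(- a / 2) / (- b / 2) = a / (b :: complex)" for a b
    by (simp add: field_simps)
  then show ?thesis
    unfolding Let_def h num den beta_def p_def[symmetric] .
qed

context
  fixes m :: nat
  assumes m_gt_4: "4 < m"
begin

lemma beta_denominator_nonzero: "(of_nat m + 2 * of_nat p + 2 * of_nat i - 4 :: complex) \<noteq> 0"
proof -
  have "(of_nat m + 2 * of_nat p + 2 * of_nat i - 4 :: complex) = of_nat (m + 2 * p + 2 * i - 4)"
    using m_gt_4 by (simp add: of_nat_diff)
  then show ?thesis
    using m_gt_4 by (simp only: of_nat_eq_0_iff)
qed

lemma alpha_1: "alpha m p 1 = - (1 / mu m p)"
proof -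
  have "(of_nat m + 2 * of_nat p + 2 - 4 :: complex) = mu m p"
    by (simp add: mu_def)
  then show ?thesis
    using beta_denominator_nonzero[of p 1] mu_nonzero[of m p] m_gt_4
    unfolding alpha_def beta_def by (simp add: field_simps)
qed

lemma alpha_Suc_Suc:
  "alpha m p (Suc (Suc k)) = alpha m p (Suc k) - 1 / mu m (p + Suc k) * (1 + 2 * alpha m p (Suc k))"
proof -
  have step: "(N / (x + 2) - 1) / 2 = (N / x - 1) / 2 - 1 / (x + 2) * (1 + 2 * ((N / x - 1) / 2))"
    if "x \<noteq> 0" "x + 2 \<noteq> 0" for N x :: complex
  proof -
    have "x * (x + 2) \<noteq> 0"
      using that by simp
    with that have 1: "N / (x + 2) = N / x - 2 * (N / (x * (x + 2)))"
      and 2: "1 / (x + 2) * (1 + 2 * ((N / x - 1) / 2)) = N / (x * (x + 2))"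
      by (simp_all add: field_simps)
    have "(a - 2 * b - 1) / 2 = (a - 1) / 2 - b" for a b :: complex
      by (simp add: field_simps)
    then show ?thesis
      unfolding 1 2 .
  qed
  have mu: "mu m (p + Suc k) = (of_nat m + 2 * of_nat p + 2 * of_nat (Suc k) - 4) + 2"
    and denom: "(of_nat m + 2 * of_nat p + 2 * of_nat (Suc (Suc k)) - 4 :: complex)
       = (of_nat m + 2 * of_nat p + 2 * of_nat (Suc k) - 4) + 2"
    by (simp_all add: mu_def algebra_simps)
  show ?thesis
    using beta_denominator_nonzero[of p "Suc k"] beta_denominator_nonzero[of p "Suc (Suc k)"]
    unfolding alpha_def beta_def mu denom by (intro step) simp_all
qed

lemma C_op_pow_leading_terms:
  assumes X: "bihom m p q X" "harm m X"
  shows "\<exists>A B. (C_op m ^^ Suc k) X = ux m ^ Suc k * X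
      + cst (alpha m p (Suc k)) * (normx2 m * (ux m ^ k * u_dx m X))
            + normx2 m * (normx2 m * A) + normu2 m * B"
proof (induction k)
  case 0
  have "(C_op m ^^ Suc 0) X = C_explicit m p q X"
    using C_op_eq_C_explicit[of m, OF _ X] m_gt_4 by simp
  also have "\<dots> = ux m ^ Suc 0 * X + cst (alpha m p (Suc 0)) * (normx2 m * (ux m ^ 0 * u_dx m X))
      + normx2 m * (normx2 m * 0)
      + normu2 m * (cst (1 / mu m p * (1 / mu m q)) * (normx2 m * du_dx m X)
      - cst (1 / mu m q) * x_du m X)"
    unfolding C_explicit_def using alpha_1 by (simp add: algebra_simps single_uminus)
  finally show ?case by blast
next
  case (Suc k)
  define Y where "Y = (C_op m ^^ Suc k) X"
  from Suc obtain A B where Y: "Y = ux m ^ Suc k * X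
      + cst (alpha m p (Suc k)) * (normx2 m * (ux m ^ k * u_dx m X))
      + normx2 m * (normx2 m * A) + normu2 m * B"
    unfolding Y_def by blast
  have Y_props: "harm m Y" "bihom m (p + Suc k) (q + Suc k) Y"
    using C_op_pow_harm_bihom[of m, OF _ X, of "Suc k"] m_gt_4 by (simp_all add: Y_def)
  obtain P1 P2 where P: "u_dx m Y = cst (1 + 2 * alpha m p (Suc k)) * (ux m ^ Suc k * u_dx m X)
      + normx2 m * P1 + normu2 m * P2"
    using u_dx_leading_terms[of m, OF _ Y] m_gt_4 by auto
  define c1 where "c1 = 1 / mu m (p + Suc k)"
  define c2 where "c2 = 1 / mu m (q + Suc k)"
  have alpha: "cst (alpha m p (Suc (Suc k))) = cst (alpha m p (Suc k))
      - cst c1 * cst (1 + 2 * alpha m p (Suc k))"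
    unfolding alpha_Suc_Suc c1_def by (simp add: cst_mult single_diff)
  have "(C_op m ^^ Suc (Suc k)) X = C_explicit m (p + Suc k) (q + Suc k) Y"
    using C_op_eq_C_explicit[of m, OF _ Y_props(2,1)] m_gt_4 by (simp add: Y_def)
  also have "\<dots> = ux m ^ Suc (Suc k) * X
      + cst (alpha m p (Suc (Suc k))) * (normx2 m * (ux m ^ Suc k * u_dx m X))
      + normx2 m * (normx2 m * (ux m * A - cst c1 * P1))
      + normu2 m * (ux m * B - cst c1 * (normx2 m * P2) - cst c2 * x_du m Y
      + cst (c1 * c2) * (normx2 m * du_dx m Y))"
    unfolding C_explicit_def c1_def[symmetric] c2_def[symmetric] P alpha
    by (subst (1) Y) (simp add: algebra_simps cst_mult[symmetric])
  finally show ?case by blast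
qed

end

lemma C_op_pow_congruence:
  assumes "4 < m" "bihom m p q X" "harm m X"
  shows "\<exists>A B. (C_op m ^^ Suc k) X = ux m ^ Suc k * X + normx2 m * A + normu2 m * B"
proof -
  obtain A B where "(C_op m ^^ Suc k) X = ux m ^ Suc k * X
      + cst (alpha m p (Suc k)) * (normx2 m * (ux m ^ k * u_dx m X))
      + normx2 m * (normx2 m * A) + normu2 m * B"
    using C_op_pow_leading_terms[OF assms] by blast
  then have "(C_op m ^^ Suc k) X = ux m ^ Suc k * X
      + normx2 m * (cst (alpha m p (Suc k)) * (ux m ^ k * u_dx m X) + normx2 m * A) + normu2 m * B"
    by (simp add: algebra_simps)
  then show ?thesis by blast
qed

lemma u_dx_C_op_pow_congruence:
  assumes m: "4 < m" and X: "bihom m p q X" "harm m X"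
  shows "\<exists>P1 P2. u_dx m ((C_op m ^^ Suc k) X)
      = cst (beta m p (Suc k)) * (ux m ^ Suc k * u_dx m X) + normx2 m * P1 + normu2 m * P2"
proof -
  obtain A B where "(C_op m ^^ Suc k) X = ux m ^ Suc k * X
      + cst (alpha m p (Suc k)) * (normx2 m * (ux m ^ k * u_dx m X))
      + normx2 m * (normx2 m * A) + normu2 m * B"
    using C_op_pow_leading_terms[OF m X] by blast
  moreover have "0 < m" "1 + 2 * alpha m p (Suc k) = beta m p (Suc k)"
    using m by (simp_all add: alpha_def field_simps)
  ultimately show ?thesis
    using u_dx_leading_terms by metis
qed

text \<open>Both sides are harmonic, and by the two congruences above they agree modulo \<open>|x|\<^sup>2\<close>
  and \<open>|u|\<^sup>2\<close>; hence they are equal.\<close>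

lemma S_u_C_op_pow:
  assumes m: "4 < m" and X: "bihom m p q X" "harm m X"
  shows "S_u m ((C_op m ^^ i) X) = cst (beta m p i) * (C_op m ^^ i) (S_u m X)"
proof (cases i)
  case 0
  have "beta m p 0 = 1"
    using beta_denominator_nonzero[OF m, of p 0] unfolding beta_def by simp
  with 0 show ?thesis by simp
next
  case (Suc k)
  have m2: "2 < m" using m by simp
  define Y where "Y = (C_op m ^^ i) X"
  define Z where "Z = (C_op m ^^ i) (S_u m X)"
  have Y: "bihom m (p + i) (q + i) Y" "harm m Y"
    using C_op_pow_harm_bihom[OF m2 X, of i] by (simp_all add: Y_def)
  have X': "S_u m X = S_explicit m q X" "bihom m (p - 1) (q + 1) (S_u m X)" "harm m (S_u m X)"
    using S_u_eq_S_explicit[OF m2 X] S_u_harm_bihom[OF m2 X] by simp_all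
  obtain P1 P2 where P: "u_dx m Y = cst (beta m p i) * (ux m ^ i * u_dx m X)
      + normx2 m * P1 + normu2 m * P2"
    using u_dx_C_op_pow_congruence[OF m X, of k] Suc by (auto simp: Y_def)
  obtain A B where Z: "Z = ux m ^ i * S_u m X + normx2 m * A + normu2 m * B"
    using C_op_pow_congruence[OF m X'(2,3), of k] Suc by (auto simp: Z_def)
  have "harm m (S_u m Y - cst (beta m p i) * Z)"
    using S_u_harm_bihom(1)[OF m2 Y] C_op_pow_harm_bihom[OF m2 X'(2,3), of i]
    by (simp add: Z_def harm_def ops_linear)
  moreover have "S_u m Y - cst (beta m p i) * Z = normx2 m * (P1 - cst (beta m p i) * A)
      + normu2 m * (P2 - cst (1 / mu m (q + i)) * du_dx m Y
        - cst (beta m p i) * (B - ux m ^ i * (cst (1 / mu m q) * du_dx m X)))"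
    unfolding S_u_eq_S_explicit[OF m2 Y] S_explicit_def P Z X'(1)
    by (simp add: algebra_simps)
  ultimately have "S_u m Y - cst (beta m p i) * Z = 0"
    by (rule harmonic_in_ideal_eq_0)
  then show ?thesis
    unfolding Y_def Z_def by simp
qed

theorem proposition4p1:
  fixes m k l i j :: nat and H :: cpoly
  assumes "m > 4" and "l \<le> k" and "H \<in> Hkl m k l" and "j \<le> k - l"
  shows "C_op m (((C_op m) ^^ i) (((S_u m) ^^ j) H)) = ((C_op m) ^^ (i + 1)) (((S_u m) ^^ j) H)
    \<and> S_u m (((C_op m) ^^ i) (((S_u m) ^^ j) H))
        = (let h = hx_eig m (int k + int i - int j - 1)
           in pscale ((h + of_nat i + 1) / (h + 1)) (((C_op m) ^^ i) (((S_u m) ^^ (j + 1)) H)))"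
proof
  show "C_op m (((C_op m) ^^ i) (((S_u m) ^^ j) H)) = ((C_op m) ^^ (i + 1)) (((S_u m) ^^ j) H)"
    by simp
next
  have H: "bihom m k l H" "harm m H"
    using assms(3) by (auto simp: Hkl_def harm_def)
  then have "bihom m (k - j) (l + j) ((S_u m ^^ j) H)" "harm m ((S_u m ^^ j) H)"
    using S_u_pow_harm_bihom assms(1) by simp_all
  then have "S_u m ((C_op m ^^ i) ((S_u m ^^ j) H))
      = pscale (beta m (k - j) i) ((C_op m ^^ i) ((S_u m ^^ (j + 1)) H))"
    by (simp add: S_u_C_op_pow[OF assms(1)] pscale_def mult_map_scale_conv_mult)
  moreover have "j \<le> k"
    using assms(2,4) by simp
  ultimately show "S_u m (((C_op m) ^^ i) (((S_u m) ^^ j) H))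
        = (let h = hx_eig m (int k + int i - int j - 1)
           in pscale ((h + of_nat i + 1) / (h + 1)) (((C_op m) ^^ i) (((S_u m) ^^ (j + 1)) H)))"
    using hx_eig_ratio_eq_beta[of j k m i] by (simp add: Let_def)
qed

end
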